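(* Let $R=\{R_\chi\}_{\chi\in\hat G\setminus\{1\}}$ be a complete set of frame fields and let $\mathcal{O}_R:\mathcal{B}(\mathcal{H}_{\rm kin})\to\mathcal{B}(\mathcal{H}_{\rm pn})$ be the quantum channel $\mathcal{O}_R(\rho)=\Pi_{\rm pn}\rho\Pi_{\rm pn}+\sum_{\chi\in\hat G\setminus\{1\}}R_\chi^{-1}P_\chi\rho P_\chi R_\chi$. Then $\mathcal{O}_R$ corrects every error set $\mathcal{E}\subset\mathcal{P}_n$ containing the identity such that, for every $E\in\mathcal{E}$: if $E\in C_1$ then $E\Pi_{\rm pn}=\eta\Pi_{\rm pn}$ for some $\eta\in\mathbb{C}$ with $|\eta|=1$; and if $E\in C_\chi$ with $\chi\ne1$ then $R_\chi^{-1}E\Pi_{\rm pn}=\eta\Pi_{\rm pn}$ for some $\eta\in\mathbb{C}$ with $|\eta|=1$. Conversely, for every maximal correctable error set $\mathcal{E}\subset\mathcal{P}_n$ containing the identity, there exists a complete set of frame fields $R$ such that $\mathcal{O}_R$ corrects $\mathcal{E}$, and this $R$ is unique up to a choice of global phase for each $R_\chi$.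
   Context: Let $n\ge1$, $0\le k<n$, $\mathcal{H}_{\rm kin}=(\mathbb{C}^2)^{\otimes n}$, $\mathcal{P}_n$ the $n$-qubit Pauli group, $G=\mathbb{Z}_2^{\times(n-k)}$, $U:G\to\mathcal{P}_n$, $g\mapsto U^g$, a faithful unitary representation with $-I\notin U(G)$. $\mathcal{H}_{\rm pn}=\{\psi:U^g\psi=\psi\ \forall g\}$, $\Pi_{\rm pn}=\frac1{|G|}\sum_gU^g$. $\hat G$ is the character group $\{\chi:G\to\{\pm1\}\}$ with trivial character $1$; $P_\chi=\frac1{|G|}\sum_g\chi(g)U^g$ projects onto $\mathcal{H}_\chi$; $C_\chi=\{E\in\mathcal{P}_n:U^gE(U^g)^\dagger=\chi(g)E\ \forall g\}$. A frame field of charge $\chi\ne1$ is an isometry $R_\chi:\mathcal{H}_{\rm pn}\to\mathcal{H}_\chi$ ($R_\chi^{-1}$ denotes its inverse on $\mathcal{H}_\chi$); a complete set of frame fields has one for each $\chi\ne1$. A set $\{E_i\}$ is correctable if $\Pi_{\rm pn}E_i^\dagger E_j\Pi_{\rm pn}=C_{ij}\Pi_{\rm pn}$ with $(C_{ij})$ Hermitian, maximal if $\mathrm{rank}(C)=2^{n-k}$. A channel $\mathcal{O}$ corrects $\mathcal{E}$ if $\mathcal{O}(\sum_k\tilde E_k\rho\tilde E_k^\dagger)=\rho$ for every density operator $\rho$ supported on $\mathcal{H}_{\rm pn}$ and every family $\{\tilde E_k\}\subset\mathrm{span}_\mathbb{C}\mathcal{E}$ with $\Pi_{\rm pn}\sum_k\tilde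 E_k^\dagger\tilde E_k\Pi_{\rm pn}=\Pi_{\rm pn}$. *)

theory Defs
  imports "Jordan_Normal_Form.Jordan_Normal_Form" "Jordan_Normal_Form.DL_Rank"
          "Jordan_Normal_Form.Schur_Decomposition"
begin

text \<open>Operators on the kinematic Hilbert space (C^2)^{(x) n} are 2^n x 2^n complex
  matrices; basis index a < 2^n is read as a bit string of length n.\<close>

definition popcnt :: "nat \<Rightarrow> nat \<Rightarrow> nat" where
  "popcnt n a = card {i. i < n \<and> bit a i}"

text \<open>The Pauli operator X^x Z^z (x, z bit strings of length n).\<close>
definition pauliXZ :: "nat \<Rightarrow> nat \<Rightarrow> nat \<Rightarrow> complex mat" where
  "pauliXZ n x z = mat (2^n) (2^n)
     (\<lambda>(a,b). if a = xor b x then (-1) ^ popcnt n (and z b) else 0)"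

definition pauli_group :: "nat \<Rightarrow> complex mat set" where
  "pauli_group n = {\<i> ^ m \<cdot>\<^sub>m pauliXZ n x z | m x z. x < 2^n \<and> z < 2^n}"

abbreviation adj :: "complex mat \<Rightarrow> complex mat" where
  "adj A \<equiv> mat_adjoint A"

definition msum :: "nat \<Rightarrow> complex mat list \<Rightarrow> complex mat" where
  "msum N xs = foldr (+) xs (0\<^sub>m N N)"

definition msumS :: "nat \<Rightarrow> ('i \<Rightarrow> complex mat) \<Rightarrow> 'i set \<Rightarrow> complex mat" where
  "msumS N f S = finsum (ring_mat TYPE(complex) N ()) f S"

definition mtrace :: "complex mat \<Rightarrow> complex" where
  "mtrace A = (\<Sum>i<dim_row A. A $$ (i,i))"

text \<open>The gauge group G = Z_2^{n-k}, realised as {g. g < 2^(n-k)} with bitwise xor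
  (neutral element 0).\<close>
definition grp :: "nat \<Rightarrow> nat \<Rightarrow> nat set" where
  "grp n k = {..<2^(n-k)}"

definition pauli_rep :: "nat \<Rightarrow> nat \<Rightarrow> (nat \<Rightarrow> complex mat) \<Rightarrow> bool" where
  "pauli_rep n k U \<longleftrightarrow>
     (\<forall>g\<in>grp n k. U g \<in> pauli_group n) \<and>
     (\<forall>g\<in>grp n k. \<forall>h\<in>grp n k. U (xor g h) = U g * U h) \<and>
     inj_on U (grp n k) \<and>
     - (1\<^sub>m (2^n)) \<notin> U ` grp n k"

text \<open>Character group of G (characters extended by 1 outside G, so that they are
  determined by their values on G).\<close>
definition chars :: "nat \<Rightarrow> nat \<Rightarrow> (nat \<Rightarrow> complex) set" where
  "chars n k = {\<chi>. (\<forall>g\<in>grp n k. \<chi> g = 1 \<or> \<chi> g = -1) \<and>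
                   (\<forall>g\<in>grp n k. \<forall>h\<in>grp n k. \<chi> (xor g h) = \<chi> g * \<chi> h) \<and>
                   (\<forall>g. g \<notin> grp n k \<longrightarrow> \<chi> g = 1)}"

definition triv_char :: "nat \<Rightarrow> complex" where
  "triv_char = (\<lambda>_. 1)"

definition Pchi :: "nat \<Rightarrow> nat \<Rightarrow> (nat \<Rightarrow> complex mat) \<Rightarrow> (nat \<Rightarrow> complex) \<Rightarrow> complex mat" where
  "Pchi n k U \<chi> = (1 / of_nat (card (grp n k))) \<cdot>\<^sub>m
      msum (2^n) (map (\<lambda>g. \<chi> g \<cdot>\<^sub>m U g) [0..<2^(n-k)])"

definition Ppn :: "nat \<Rightarrow> nat \<Rightarrow> (nat \<Rightarrow> complex mat) \<Rightarrow> complex mat" where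
  "Ppn n k U = (1 / of_nat (card (grp n k))) \<cdot>\<^sub>m msum (2^n) (map U [0..<2^(n-k)])"

definition Cset :: "nat \<Rightarrow> nat \<Rightarrow> (nat \<Rightarrow> complex mat) \<Rightarrow> (nat \<Rightarrow> complex) \<Rightarrow> complex mat set" where
  "Cset n k U \<chi> = {E \<in> pauli_group n. \<forall>g\<in>grp n k. U g * E * adj (U g) = \<chi> g \<cdot>\<^sub>m E}"

text \<open>A frame field of charge chi: an isometry H_pn -> H_chi, represented by its
  extension by zero on the orthogonal complement of H_pn (a 2^n x 2^n matrix R with
  R^dagger R = Pi_pn and range inside H_chi).  Its inverse on H_chi is R^dagger.\<close>
definition frame_field :: "nat \<Rightarrow> nat \<Rightarrow> (nat \<Rightarrow> complex mat) \<Rightarrow> (nat \<Rightarrow> complex) \<Rightarrow> complex mat \<Rightarrow> bool" where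
  "frame_field n k U \<chi> R \<longleftrightarrow> R \<in> carrier_mat (2^n) (2^n) \<and>
      adj R * R = Ppn n k U \<and> Pchi n k U \<chi> * R = R"

definition complete_frames :: "nat \<Rightarrow> nat \<Rightarrow> (nat \<Rightarrow> complex mat) \<Rightarrow> ((nat \<Rightarrow> complex) \<Rightarrow> complex mat) \<Rightarrow> bool" where
  "complete_frames n k U R \<longleftrightarrow> (\<forall>\<chi>\<in>chars n k - {triv_char}. frame_field n k U \<chi> (R \<chi>))"

definition channelO :: "nat \<Rightarrow> nat \<Rightarrow> (nat \<Rightarrow> complex mat) \<Rightarrow> ((nat \<Rightarrow> complex) \<Rightarrow> complex mat) \<Rightarrow> complex mat \<Rightarrow> complex mat" where
  "channelO n k U R \<rho> = Ppn n k U * \<rho> * Ppn n k U +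
     msumS (2^n) (\<lambda>\<chi>. adj (R \<chi>) * Pchi n k U \<chi> * \<rho> * Pchi n k U \<chi> * R \<chi>)
        (chars n k - {triv_char})"

definition psd :: "nat \<Rightarrow> complex mat \<Rightarrow> bool" where
  "psd N A \<longleftrightarrow> A \<in> carrier_mat N N \<and>
     (\<forall>v\<in>carrier_vec N. Im (conjugate v \<bullet> (A *\<^sub>v v)) = 0 \<and> Re (conjugate v \<bullet> (A *\<^sub>v v)) \<ge> 0)"

definition density_pn :: "nat \<Rightarrow> nat \<Rightarrow> (nat \<Rightarrow> complex mat) \<Rightarrow> complex mat \<Rightarrow> bool" where
  "density_pn n k U \<rho> \<longleftrightarrow> psd (2^n) \<rho> \<and> mtrace \<rho> = 1 \<and> Ppn n k U * \<rho> * Ppn n k U = \<rho>"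

definition mspan :: "nat \<Rightarrow> complex mat set \<Rightarrow> complex mat set" where
  "mspan N S = {msum N (map (\<lambda>(c,E). c \<cdot>\<^sub>m E) cs) | cs. set (map snd cs) \<subseteq> S}"

definition corrects :: "nat \<Rightarrow> nat \<Rightarrow> (nat \<Rightarrow> complex mat) \<Rightarrow> (complex mat \<Rightarrow> complex mat) \<Rightarrow> complex mat set \<Rightarrow> bool" where
  "corrects n k U Ch Es \<longleftrightarrow>
     (\<forall>\<rho> Ks. density_pn n k U \<rho> \<longrightarrow> set Ks \<subseteq> mspan (2^n) Es \<longrightarrow>
        Ppn n k U * msum (2^n) (map (\<lambda>K. adj K * K) Ks) * Ppn n k U = Ppn n k U \<longrightarrow>
        Ch (msum (2^n) (map (\<lambda>K. K * \<rho> * adj K) Ks)) = \<rho>)"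

definition correctable_with :: "nat \<Rightarrow> nat \<Rightarrow> (nat \<Rightarrow> complex mat) \<Rightarrow> complex mat set \<Rightarrow> (complex mat \<Rightarrow> complex mat \<Rightarrow> complex) \<Rightarrow> bool" where
  "correctable_with n k U Es C \<longleftrightarrow>
     (\<forall>E\<in>Es. \<forall>F\<in>Es. Ppn n k U * adj E * F * Ppn n k U = C E F \<cdot>\<^sub>m Ppn n k U) \<and>
     (\<forall>E\<in>Es. \<forall>F\<in>Es. C E F = cnj (C F E))"

definition correctable :: "nat \<Rightarrow> nat \<Rightarrow> (nat \<Rightarrow> complex mat) \<Rightarrow> complex mat set \<Rightarrow> bool" where
  "correctable n k U Es \<longleftrightarrow> (\<exists>C. correctable_with n k U Es C)"

definition maximal_correctable :: "nat \<Rightarrow> nat \<Rightarrow> (nat \<Rightarrow> complex mat) \<Rightarrow> complex mat set \<Rightarrow> bool" where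
  "maximal_correctable n k U Es \<longleftrightarrow> finite Es \<and>
     (\<exists>C e. correctable_with n k U Es C \<and> bij_betw e {..<card Es} Es \<and>
        vec_space.rank (card Es) (mat (card Es) (card Es) (\<lambda>(i,j). C (e i) (e j))) = 2^(n-k))"

end

theory Submission
  imports Defs
begin

text \<open>Every Pauli operator E has a charge chi: conjugation by U^g multiplies it by chi(g), so
  E maps H_pn isometrically into H_chi.  Under the hypothesis of the first part every error acts
  on H_pn as a phase times the frame field of its charge (Pi_pn itself for charge 1), hence every
  Kraus operator K in their span satisfies K Pi_pn = sum_chi a_chi R_chi.  The projections P_chi
  separate the summands, so O_R(K rho K^dagger) = (sum_chi |a_chi|^2) rho, while
  Pi_pn K^dagger K Pi_pn = (sum_chi |a_chi|^2) Pi_pn; the normalisation of the Kraus family makes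
  the total weight 1.

  For a correctable set, errors of different charge have orthogonal images of H_pn and errors of
  equal charge agree on H_pn up to a phase, so (C_ij) is a sum of one rank-one matrix per charge
  occurring in the set.  There are at most 2^(n-k) characters, so maximality forces every charge to
  occur, and R_chi = E_chi Pi_pn for an error E_chi of charge chi is a complete set of frame fields
  that works.  If O_R' corrects the set as well, M = R'_chi^dagger E_chi Pi_pn satisfies
  M rho M^dagger = rho for every pure state rho on H_pn; this forces M = theta Pi_pn with
  |theta| = 1, i.e. R'_chi = theta^* R_chi.\<close>

section \<open>Matrix preliminaries\<close>

lemma mat_adjoint_dim [simp]: "dim_row (adj A) = dim_col A" "dim_col (adj A) = dim_row A"
  unfolding mat_adjoint_def by auto

lemma index_mat_adjoint [simp]: "i < dim_col A \<Longrightarrow> j < dim_row A \<Longrightarrow> adj A $$ (i,j) = cnj (A $$ (j,i))"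
  unfolding mat_adjoint_def by (simp add: mat_of_rows_index cols_def)

lemma mat_adjoint_carrier [simp]: "A \<in> carrier_mat n m \<Longrightarrow> adj A \<in> carrier_mat m n"
  unfolding carrier_mat_def by simp

lemma mat_adjoint_adjoint [simp]: "adj (adj A) = A"
  by (rule eq_matI) simp_all

lemma mat_adjoint_mult:
  "A \<in> carrier_mat n m \<Longrightarrow> B \<in> carrier_mat m p \<Longrightarrow> adj (A * B) = adj B * adj A"
  by (rule eq_matI) (auto simp: scalar_prod_def intro: sum.cong)

lemma mat_adjoint_smult: "adj (c \<cdot>\<^sub>m A) = cnj c \<cdot>\<^sub>m adj A"
  by (rule eq_matI) simp_all

lemma smult_smult_mat: "a \<cdot>\<^sub>m (b \<cdot>\<^sub>m A) = (a * b) \<cdot>\<^sub>m (A :: complex mat)"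
  by (rule eq_matI) simp_all

lemma one_smult_mat [simp]: "(1::complex) \<cdot>\<^sub>m A = A"
  by (rule eq_matI) simp_all

lemma zero_smult_mat [simp]: "(0::complex) \<cdot>\<^sub>m A = 0\<^sub>m (dim_row A) (dim_col A)"
  by (rule eq_matI) simp_all

lemma minus_one_smult_mat: "(-1::complex) \<cdot>\<^sub>m A = - A"
  by (rule eq_matI) simp_all

lemma smult_mult_smult_mat:
  "A \<in> carrier_mat n m \<Longrightarrow> B \<in> carrier_mat m p \<Longrightarrow>
   (a \<cdot>\<^sub>m A) * (b \<cdot>\<^sub>m B) = (a * b) \<cdot>\<^sub>m (A * (B::complex mat))"
  by (simp add: mult_smult_assoc_mat[of _ n m _ p] mult_smult_distrib[of _ n m _ p]
      smult_smult_mat mult.commute)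

lemma smult_mat_cancel:
  assumes "A \<in> carrier_mat n m" "A \<noteq> 0\<^sub>m n m" "c \<cdot>\<^sub>m A = d \<cdot>\<^sub>m (A::complex mat)"
  shows "c = d"
proof -
  obtain i j where ij: "i < n" "j < m" "A $$ (i,j) \<noteq> 0"
    using assms(1,2) by (metis eq_matI carrier_matD index_zero_mat)
  have "(c \<cdot>\<^sub>m A) $$ (i,j) = (d \<cdot>\<^sub>m A) $$ (i,j)" using assms(3) by simp
  then show ?thesis using ij assms(1) by simp
qed

lemma one_mat_neq_zero: "0 < n \<Longrightarrow> 1\<^sub>m n \<noteq> (0\<^sub>m n n :: complex mat)"
  by (metis index_one_mat(1) index_zero_mat(1) zero_neq_one)

text \<open>The inner dimension of \<open>mult_carrier_mat\<close> occurs only in its premises, so the simplifier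
  cannot use it, whereas it can use the square version.\<close>

lemma mult_carrier_square_mat [simp]:
  "A \<in> carrier_mat n n \<Longrightarrow> B \<in> carrier_mat n n \<Longrightarrow> A * B \<in> carrier_mat n n"
  by (rule mult_carrier_mat)

lemma sandwich_add:
  assumes "A \<in> carrier_mat n n" "B \<in> carrier_mat n n" "C \<in> carrier_mat n n" "D \<in> carrier_mat n n"
    and "X \<in> carrier_mat n n" "Y \<in> carrier_mat n n"
  shows "A * B * (X + Y) * C * D = A * B * X * C * D + A * B * Y * C * (D :: complex mat)"
  using assms by (simp add: mult_add_distrib_mat[of _ n n] add_mult_distrib_mat[of _ n n])

lemma msum_carrier:
  "(\<And>x. x \<in> set xs \<Longrightarrow> x \<in> carrier_mat n n) \<Longrightarrow> msum n xs \<in> carrier_mat n n"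
  by (induction xs) (simp_all add: msum_def)

text \<open>Finite sums of \<open>n \<times> n\<close> matrices, taken entrywise so that no carrier side conditions are
  needed to state them; \<^const>\<open>msum\<close> and \<^const>\<open>msumS\<close> agree with them on square matrices.\<close>

definition mat_sum :: "nat \<Rightarrow> ('i \<Rightarrow> complex mat) \<Rightarrow> 'i set \<Rightarrow> complex mat" where
  "mat_sum n f S = mat n n (\<lambda>(i,j). \<Sum>x\<in>S. f x $$ (i,j))"

lemma mat_sum_carrier [simp]: "mat_sum n f S \<in> carrier_mat n n"
  and mat_sum_dim [simp]: "dim_row (mat_sum n f S) = n" "dim_col (mat_sum n f S) = n"
  unfolding mat_sum_def by auto

lemma index_mat_sum [simp]:
  "i < n \<Longrightarrow> j < n \<Longrightarrow> mat_sum n f S $$ (i,j) = (\<Sum>x\<in>S. f x $$ (i,j))"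
  unfolding mat_sum_def by simp

lemma mat_sum_cong: "(\<And>x. x \<in> S \<Longrightarrow> f x = g x) \<Longrightarrow> mat_sum n f S = mat_sum n g S"
  unfolding mat_sum_def by (simp cong: sum.cong)

lemma mat_sum_empty [simp]: "mat_sum n f {} = 0\<^sub>m n n"
  by (rule eq_matI) simp_all

lemma mat_sum_insert:
  "finite S \<Longrightarrow> x \<notin> S \<Longrightarrow> f x \<in> carrier_mat n n \<Longrightarrow> mat_sum n f (insert x S) = f x + mat_sum n f S"
  by (rule eq_matI) simp_all

lemma mat_sum_zero: "(\<And>x. x \<in> S \<Longrightarrow> f x = 0\<^sub>m n n) \<Longrightarrow> mat_sum n f S = 0\<^sub>m n n"
  by (rule eq_matI) simp_all

lemma mat_sum_single:
  assumes "finite S" "x\<^sub>0 \<in> S" "\<And>x. x \<in> S \<Longrightarrow> x \<noteq> x\<^sub>0 \<Longrightarrow> f x = 0\<^sub>m n n"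
    and "f x\<^sub>0 \<in> carrier_mat n n"
  shows "mat_sum n f S = f x\<^sub>0"
proof -
  have "mat_sum n f S = f x\<^sub>0 + mat_sum n f (S - {x\<^sub>0})"
    using assms mat_sum_insert[of "S - {x\<^sub>0}" x\<^sub>0 f n] by (simp add: insert_absorb)
  also have "mat_sum n f (S - {x\<^sub>0}) = 0\<^sub>m n n" using assms by (intro mat_sum_zero) auto
  finally show ?thesis using assms by simp
qed

lemma mat_sum_reindex: "bij_betw h S T \<Longrightarrow> mat_sum n (\<lambda>x. f (h x)) S = mat_sum n f T"
  unfolding mat_sum_def using sum.reindex_bij_betw[of h S T "\<lambda>x. f x $$ _"] by simp

lemma msumS_eq_mat_sum:
  assumes "finite S" "\<And>x. x \<in> S \<Longrightarrow> f x \<in> carrier_mat n n"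
  shows "msumS n f S = mat_sum n f S"
  using assms
proof (induction S rule: finite_induct)
  case empty
  interpret ring "ring_mat TYPE(complex) n ()" by (rule ring_mat)
  show ?case unfolding msumS_def by (simp add: ring_mat_simps)
next
  case (insert x F)
  interpret ring "ring_mat TYPE(complex) n ()" by (rule ring_mat)
  have "msumS n f (insert x F) = f x + msumS n f F"
    unfolding msumS_def using insert by (subst finsum_insert) (auto simp: ring_mat_simps Pi_def)
  then show ?case using insert by (simp add: mat_sum_insert)
qed

lemma msum_eq_mat_sum:
  assumes "distinct xs" "\<And>x. x \<in> set xs \<Longrightarrow> f x \<in> carrier_mat n n"
  shows "msum n (map f xs) = mat_sum n f (set xs)"
  using assms by (induction xs) (simp_all add: msum_def mat_sum_insert)

lemma mult_mat_sum:
  assumes "A \<in> carrier_mat n n" "\<And>x. x \<in> S \<Longrightarrow> f x \<in> carrier_mat n n"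
  shows "A * mat_sum n f S = mat_sum n (\<lambda>x. A * f x) S"
proof (rule eq_matI)
  fix i j assume ij: "i < dim_row (mat_sum n (\<lambda>x. A * f x) S)" "j < dim_col (mat_sum n (\<lambda>x. A * f x) S)"
  have "(A * mat_sum n f S) $$ (i,j) = (\<Sum>l<n. A $$ (i,l) * (\<Sum>x\<in>S. f x $$ (l,j)))"
    using ij assms(1) by (simp add: scalar_prod_def atLeast0LessThan)
  also have "\<dots> = (\<Sum>x\<in>S. \<Sum>l<n. A $$ (i,l) * f x $$ (l,j))"
    by (simp add: sum_distrib_left sum.swap[of _ S])
  also have "\<dots> = mat_sum n (\<lambda>x. A * f x) S $$ (i,j)"
    using ij assms(1) by (auto simp: scalar_prod_def atLeast0LessThan carrier_matD[OF assms(2)]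
        intro!: sum.cong)
  finally show "(A * mat_sum n f S) $$ (i,j) = mat_sum n (\<lambda>x. A * f x) S $$ (i,j)" .
qed (use assms in simp_all)

lemma mat_sum_mult:
  assumes "A \<in> carrier_mat n n" "\<And>x. x \<in> S \<Longrightarrow> f x \<in> carrier_mat n n"
  shows "mat_sum n f S * A = mat_sum n (\<lambda>x. f x * A) S"
proof (rule eq_matI)
  fix i j assume ij: "i < dim_row (mat_sum n (\<lambda>x. f x * A) S)" "j < dim_col (mat_sum n (\<lambda>x. f x * A) S)"
  have "(mat_sum n f S * A) $$ (i,j) = (\<Sum>l<n. (\<Sum>x\<in>S. f x $$ (i,l)) * A $$ (l,j))"
    using ij assms(1) by (simp add: scalar_prod_def atLeast0LessThan)
  also have "\<dots> = (\<Sum>x\<in>S. \<Sum>l<n. f x $$ (i,l) * A $$ (l,j))"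
    by (simp add: sum_distrib_right sum.swap[of _ S])
  also have "\<dots> = mat_sum n (\<lambda>x. f x * A) S $$ (i,j)"
    using ij assms(1) by (auto simp: scalar_prod_def atLeast0LessThan carrier_matD[OF assms(2)]
        intro!: sum.cong)
  finally show "(mat_sum n f S * A) $$ (i,j) = mat_sum n (\<lambda>x. f x * A) S $$ (i,j)" .
qed (use assms in simp_all)

lemma smult_mat_sum:
  assumes "\<And>x. x \<in> S \<Longrightarrow> f x \<in> carrier_mat n n"
  shows "c \<cdot>\<^sub>m mat_sum n f S = mat_sum n (\<lambda>x. c \<cdot>\<^sub>m f x) S"
  by (rule eq_matI) (auto simp: sum_distrib_left carrier_matD[OF assms] intro!: sum.cong)

lemma mat_sum_add:
  assumes "\<And>x. x \<in> S \<Longrightarrow> f x \<in> carrier_mat n n" "\<And>x. x \<in> S \<Longrightarrow> g x \<in> carrier_mat n n"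
  shows "mat_sum n f S + mat_sum n g S = mat_sum n (\<lambda>x. f x + g x) S"
proof (rule eq_matI)
  fix i j assume "i < dim_row (mat_sum n (\<lambda>x. f x + g x) S)" "j < dim_col (mat_sum n (\<lambda>x. f x + g x) S)"
  then have ij: "i < n" "j < n" by simp_all
  then have "(mat_sum n f S + mat_sum n g S) $$ (i,j) = (\<Sum>x\<in>S. f x $$ (i,j) + g x $$ (i,j))"
    by (simp add: sum.distrib)
  also have "\<dots> = mat_sum n (\<lambda>x. f x + g x) S $$ (i,j)"
    using ij by (auto simp: carrier_matD[OF assms(1)] carrier_matD[OF assms(2)] intro!: sum.cong)
  finally show "(mat_sum n f S + mat_sum n g S) $$ (i,j) = mat_sum n (\<lambda>x. f x + g x) S $$ (i,j)" .
qed simp_all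

lemma mat_adjoint_mat_sum:
  assumes "\<And>x. x \<in> S \<Longrightarrow> f x \<in> carrier_mat n n"
  shows "adj (mat_sum n f S) = mat_sum n (\<lambda>x. adj (f x)) S"
  by (rule eq_matI) (auto simp: carrier_matD[OF assms] intro!: sum.cong)

lemma mat_sum_smult_const:
  "A \<in> carrier_mat n n \<Longrightarrow> mat_sum n (\<lambda>x. c x \<cdot>\<^sub>m A) S = (\<Sum>x\<in>S. c x) \<cdot>\<^sub>m A"
  by (rule eq_matI) (simp_all add: sum_distrib_right)

lemma mtrace_mat_sum:
  assumes "\<And>x. x \<in> S \<Longrightarrow> f x \<in> carrier_mat n n"
  shows "mtrace (mat_sum n f S) = (\<Sum>x\<in>S. mtrace (f x))"
  unfolding mtrace_def by (simp add: sum.swap[of _ S] carrier_matD[OF assms])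

lemma mtrace_smult: "A \<in> carrier_mat n n \<Longrightarrow> mtrace (c \<cdot>\<^sub>m A) = c * mtrace A"
  unfolding mtrace_def by (simp add: sum_distrib_left)

lemma mtrace_one: "mtrace (1\<^sub>m n) = of_nat n"
  unfolding mtrace_def by simp

lemma cnj_mult_self: "cnj z * z = complex_of_real ((cmod z)\<^sup>2)"
  by (subst mult.commute) (rule complex_norm_square[symmetric])

lemma cnj_mult_self_eq_1_iff: "cnj z * z = 1 \<longleftrightarrow> cmod z = 1"
proof -
  have "cnj z * z = 1 \<longleftrightarrow> (cmod z)\<^sup>2 = 1" by (simp only: cnj_mult_self of_real_eq_1_iff)
  also have "\<dots> \<longleftrightarrow> cmod z = 1" using norm_ge_zero[of z] by (smt (verit) power2_eq_1_iff)
  finally show ?thesis .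
qed

lemma index_mat_adjoint_mult:
  assumes "A \<in> carrier_mat n m" "B \<in> carrier_mat n p" "i < m" "j < p"
  shows "(adj A * B) $$ (i,j) = (\<Sum>l<n. cnj (A $$ (l,i)) * B $$ (l,j))"
  using assms by (simp add: scalar_prod_def atLeast0LessThan)

lemma mat_adjoint_mult_self_eq_zero:
  assumes X: "X \<in> carrier_mat n m" and z: "adj X * X = 0\<^sub>m m m"
  shows "X = 0\<^sub>m n m"
proof (rule eq_matI)
  fix i j assume "i < dim_row (0\<^sub>m n m :: complex mat)" "j < dim_col (0\<^sub>m n m :: complex mat)"
  then have i: "i < n" and j: "j < m" by simp_all
  have "(adj X * X) $$ (j,j) = complex_of_real (\<Sum>l<n. (cmod (X $$ (l,j)))\<^sup>2)"
    unfolding index_mat_adjoint_mult[OF X X j j] cnj_mult_self of_real_sum ..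
  then have "complex_of_real (\<Sum>l<n. (cmod (X $$ (l,j)))\<^sup>2) = 0" using z j by simp
  then have "(\<Sum>l<n. (cmod (X $$ (l,j)))\<^sup>2) = 0" by (simp only: of_real_eq_0_iff)
  then have "(cmod (X $$ (i,j)))\<^sup>2 = 0" using i by (simp add: sum_nonneg_eq_0_iff)
  then show "X $$ (i,j) = (0\<^sub>m n m :: complex mat) $$ (i,j)" using i j by simp
qed (use X in auto)

text \<open>Two isometries with the same source projection whose overlap is a phase times that projection
  differ by exactly that phase: \<open>(A - \<eta> S)\<^sup>\<dagger> (A - \<eta> S) = Q - 2 Q + |\<eta>|\<^sup>2 Q = 0\<close>.\<close>

lemma eq_smult_if_overlap_phase:
  assumes A: "A \<in> carrier_mat n m" and S: "S \<in> carrier_mat n m"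
    and AA: "adj A * A = Q" and SS: "adj S * S = Q" and SA: "adj S * A = \<eta> \<cdot>\<^sub>m Q"
    and eta: "cmod \<eta> = 1"
  shows "A = \<eta> \<cdot>\<^sub>m S"
proof -
  have ce: "cnj \<eta> * \<eta> = 1" using eta cnj_mult_self_eq_1_iff by blast
  define X where "X = mat n m (\<lambda>(l,j). A $$ (l,j) - \<eta> * S $$ (l,j))"
  have X: "X \<in> carrier_mat n m" unfolding X_def by simp
  have Q: "Q \<in> carrier_mat m m" using AA A by auto
  have "adj X * X = 0\<^sub>m m m"
  proof (rule eq_matI)
    fix i j assume "i < dim_row (0\<^sub>m m m :: complex mat)" "j < dim_col (0\<^sub>m m m :: complex mat)"
    then have i: "i < m" and j: "j < m" by simp_all
    let ?sum = "\<lambda>F G. \<Sum>l<n. cnj (F $$ (l,i)) * G $$ (l,j)"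
    have aa: "?sum A A = Q $$ (i,j)" and ss: "?sum S S = Q $$ (i,j)" and sa: "?sum S A = \<eta> * Q $$ (i,j)"
      using index_mat_adjoint_mult[OF A A i j] index_mat_adjoint_mult[OF S S i j]
        index_mat_adjoint_mult[OF S A i j] AA SS SA Q i j by auto
    have Qji: "cnj (Q $$ (j,i)) = Q $$ (i,j)"
      using index_mat_adjoint_mult[OF A A j i] index_mat_adjoint_mult[OF A A i j] AA
      by (simp add: mult.commute)
    have "?sum A S = cnj (\<Sum>l<n. cnj (S $$ (l,j)) * A $$ (l,i))"
      by (simp add: mult.commute)
    also have "\<dots> = cnj (\<eta> * Q $$ (j,i))"
      using index_mat_adjoint_mult[OF S A j i] SA Q i j by auto
    finally have as: "?sum A S = cnj \<eta> * Q $$ (i,j)" using Qji by simp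
    have "(adj X * X) $$ (i,j) = (\<Sum>l<n. cnj (A $$ (l,i)) * A $$ (l,j) - \<eta> * (cnj (A $$ (l,i)) * S $$ (l,j))
        - cnj \<eta> * (cnj (S $$ (l,i)) * A $$ (l,j)) + cnj \<eta> * \<eta> * (cnj (S $$ (l,i)) * S $$ (l,j)))"
      unfolding index_mat_adjoint_mult[OF X X i j] by (rule sum.cong) (simp_all add: X_def i j algebra_simps)
    also have "\<dots> = ?sum A A - \<eta> * ?sum A S - cnj \<eta> * ?sum S A + cnj \<eta> * \<eta> * ?sum S S"
      by (simp add: sum.distrib sum_subtractf sum_distrib_left)
    also have "\<dots> = 0" unfolding aa ss sa as using ce by (simp add: algebra_simps)
    finally show "(adj X * X) $$ (i,j) = (0\<^sub>m m m :: complex mat) $$ (i,j)" using i j by simp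
  qed (use X in auto)
  then have "X = 0\<^sub>m n m" by (rule mat_adjoint_mult_self_eq_zero[OF X])
  show ?thesis
  proof (rule eq_matI)
    fix i j assume "i < dim_row (\<eta> \<cdot>\<^sub>m S)" "j < dim_col (\<eta> \<cdot>\<^sub>m S)"
    then have ij: "i < n" "j < m" using S by auto
    then have "X $$ (i,j) = 0" using \<open>X = 0\<^sub>m n m\<close> by simp
    then show "A $$ (i,j) = (\<eta> \<cdot>\<^sub>m S) $$ (i,j)" using ij S by (simp add: X_def)
  qed (use A S in auto)
qed

section \<open>Pauli operators\<close>

definition parity_sign :: "nat \<Rightarrow> nat \<Rightarrow> complex" where
  "parity_sign n a = (-1) ^ popcnt n a"

lemma xor_less_exp: "(a::nat) < 2^n \<Longrightarrow> b < 2^n \<Longrightarrow> xor a b < 2^n"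
  by (metis take_bit_nat_eq_self_iff take_bit_nat_less_exp take_bit_xor)

lemma bit_imp_less_exp: "(a::nat) < 2^n \<Longrightarrow> bit a i \<Longrightarrow> i < n"
  by (metis bit_take_bit_iff take_bit_nat_eq_self_iff)

lemma xor_xor_cancel_right [simp]: "xor (xor a x) x = (a::nat)"
  by (simp add: xor.assoc)

lemma eq_xor_swap: "((b::nat) = xor a x) = (a = xor b x)"
  by auto

lemma and_xor_distrib_left: "and (z::nat) (xor c x) = xor (and z c) (and z x)"
  by (rule bit_eqI) (auto simp: bit_simps)

lemma and_xor_distrib_right: "and (xor z z') (c::nat) = xor (and z c) (and z' c)"
  by (rule bit_eqI) (auto simp: bit_simps)

lemma popcnt_xor:
  "popcnt n (xor a b) + 2 * card ({i. i < n \<and> bit a i} \<inter> {i. i < n \<and> bit b i})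
   = popcnt n a + popcnt n b"
proof -
  define A where "A = {i. i < n \<and> bit a i}"
  define B where "B = {i. i < n \<and> bit b i}"
  have fin: "finite A" "finite B" unfolding A_def B_def by simp_all
  have "{i. i < n \<and> bit (xor a b) i} = (A - B) \<union> (B - A)"
    unfolding A_def B_def by (auto simp: bit_xor_iff)
  then have "popcnt n (xor a b) = card ((A - B) \<union> (B - A))" unfolding popcnt_def by simp
  also have "\<dots> = card (A - B) + card (B - A)" using fin by (intro card_Un_disjoint) auto
  finally have "popcnt n (xor a b) = card (A - B) + card (B - A)" .
  moreover have "card A = card (A \<inter> B) + card (A - B)" "card B = card (A \<inter> B) + card (B - A)"
    using card_Int_Diff[OF fin(1), of B] card_Int_Diff[OF fin(2), of A] by (simp_all add: Int_commute)
  ultimately show ?thesis unfolding popcnt_def A_def B_def by simp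
qed

lemma parity_sign_xor: "parity_sign n (xor a b) = parity_sign n a * parity_sign n b"
proof -
  let ?c = "card ({i. i < n \<and> bit a i} \<inter> {i. i < n \<and> bit b i})"
  have "(-1::complex) ^ (popcnt n a + popcnt n b) = (-1) ^ (popcnt n (xor a b) + 2 * ?c)"
    by (simp only: popcnt_xor)
  then show ?thesis unfolding parity_sign_def by (simp add: power_add power_mult)
qed

lemma parity_sign_square: "parity_sign n a * parity_sign n a = 1"
  unfolding parity_sign_def by (simp flip: power_add mult_2)

lemma parity_sign_cases: "parity_sign n a = 1 \<or> parity_sign n a = -1"
  unfolding parity_sign_def by (metis neg_one_even_power neg_one_odd_power)

lemma cnj_parity_sign [simp]: "cnj (parity_sign n a) = parity_sign n a"
  unfolding parity_sign_def by simp

lemma pauliXZ_carrier [simp]: "pauliXZ n x z \<in> carrier_mat (2^n) (2^n)"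
  and pauliXZ_dim [simp]: "dim_row (pauliXZ n x z) = 2^n" "dim_col (pauliXZ n x z) = 2^n"
  unfolding pauliXZ_def by simp_all

lemma index_pauliXZ:
  "a < 2^n \<Longrightarrow> b < 2^n \<Longrightarrow>
   pauliXZ n x z $$ (a,b) = (if a = xor b x then parity_sign n (and z b) else 0)"
  unfolding pauliXZ_def parity_sign_def by simp

text \<open>Row \<open>a\<close> of \<open>X\<^sup>x Z\<^sup>z\<close> has its only nonzero entry in column \<open>a \<oplus> x\<close>.\<close>

lemma index_pauliXZ_mult:
  assumes x: "x < 2^n" and a: "a < 2^n" and B: "B \<in> carrier_mat (2^n) m" and c: "c < m"
  shows "(pauliXZ n x z * B) $$ (a,c) = parity_sign n (and z (xor a x)) * B $$ (xor a x, c)"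
proof -
  have ax: "xor a x < 2^n" using a x by (rule xor_less_exp)
  have "(pauliXZ n x z * B) $$ (a,c) = (\<Sum>b<2^n. pauliXZ n x z $$ (a,b) * B $$ (b,c))"
    using a B c by (simp add: scalar_prod_def atLeast0LessThan)
  also have "\<dots> = (\<Sum>b<2^n. if b = xor a x then parity_sign n (and z b) * B $$ (b,c) else 0)"
    using a by (intro sum.cong) (auto simp: index_pauliXZ eq_xor_swap)
  finally show ?thesis using ax by simp
qed

lemma pauliXZ_mult:
  assumes x: "x < 2^n" and x': "x' < 2^n"
  shows "pauliXZ n x z * pauliXZ n x' z' =
    parity_sign n (and z x') \<cdot>\<^sub>m pauliXZ n (xor x x') (xor z z')"
proof (rule eq_matI)
  fix a c assume "a < dim_row (parity_sign n (and z x') \<cdot>\<^sub>m pauliXZ n (xor x x') (xor z z'))"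
    "c < dim_col (parity_sign n (and z x') \<cdot>\<^sub>m pauliXZ n (xor x x') (xor z z'))"
  then have a: "a < 2^n" and c: "c < 2^n" by simp_all
  have ax: "xor a x < 2^n" using a x by (rule xor_less_exp)
  have "parity_sign n (and z (xor c x')) * parity_sign n (and z' c) =
      parity_sign n (and z x') * parity_sign n (and (xor z z') c)"
    unfolding and_xor_distrib_left and_xor_distrib_right parity_sign_xor by simp
  moreover have "(xor a x = xor c x') = (a = xor c (xor x x'))"
    by (metis xor.assoc xor.commute xor_xor_cancel_right)
  moreover have "(pauliXZ n x z * pauliXZ n x' z') $$ (a,c) =
      parity_sign n (and z (xor a x)) * pauliXZ n x' z' $$ (xor a x, c)"
    by (rule index_pauliXZ_mult[OF x a pauliXZ_carrier c])
  ultimately show "(pauliXZ n x z * pauliXZ n x' z') $$ (a,c) =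
      (parity_sign n (and z x') \<cdot>\<^sub>m pauliXZ n (xor x x') (xor z z')) $$ (a,c)"
    using a c ax by (auto simp: index_pauliXZ)
qed simp_all

lemma pauliXZ_0_0: "pauliXZ n 0 0 = 1\<^sub>m (2^n)"
  by (rule eq_matI) (simp_all add: index_pauliXZ parity_sign_def popcnt_def)

lemma pauliXZ_square: "x < 2^n \<Longrightarrow> pauliXZ n x z * pauliXZ n x z = parity_sign n (and z x) \<cdot>\<^sub>m 1\<^sub>m (2^n)"
  by (simp add: pauliXZ_mult pauliXZ_0_0)

lemma pauliXZ_adjoint:
  assumes "x < 2^n"
  shows "adj (pauliXZ n x z) = parity_sign n (and z x) \<cdot>\<^sub>m pauliXZ n x z"
proof (rule eq_matI)
  fix a b assume "a < dim_row (parity_sign n (and z x) \<cdot>\<^sub>m pauliXZ n x z)"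
    "b < dim_col (parity_sign n (and z x) \<cdot>\<^sub>m pauliXZ n x z)"
  then have a: "a < 2^n" and b: "b < 2^n" by simp_all
  have "a = xor b x \<Longrightarrow> parity_sign n (and z a) = parity_sign n (and z x) * parity_sign n (and z b)"
    by (simp add: and_xor_distrib_left parity_sign_xor mult.commute)
  then show "adj (pauliXZ n x z) $$ (a,b) = (parity_sign n (and z x) \<cdot>\<^sub>m pauliXZ n x z) $$ (a,b)"
    using a b by (auto simp: index_pauliXZ eq_xor_swap[of b a])
qed simp_all

lemma pauliXZ_unitary:
  assumes "x < 2^n"
  shows "adj (pauliXZ n x z) * pauliXZ n x z = 1\<^sub>m (2^n)"
    and "pauliXZ n x z * adj (pauliXZ n x z) = 1\<^sub>m (2^n)"
  using assms
  by (simp_all add: pauliXZ_adjoint mult_smult_assoc_mat[OF pauliXZ_carrier pauliXZ_carrier]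
      mult_smult_distrib[OF pauliXZ_carrier pauliXZ_carrier] pauliXZ_square smult_smult_mat
      parity_sign_square)

lemma pauli_groupE:
  assumes "P \<in> pauli_group n"
  obtains m x z where "x < 2^n" "z < 2^n" "P = \<i> ^ m \<cdot>\<^sub>m pauliXZ n x z"
  using assms unfolding pauli_group_def by blast

lemma pauli_group_carrier: "P \<in> pauli_group n \<Longrightarrow> P \<in> carrier_mat (2^n) (2^n)"
  by (erule pauli_groupE) simp

lemma pauli_group_unitary:
  assumes "P \<in> pauli_group n"
  shows "adj P * P = 1\<^sub>m (2^n)" "P * adj P = 1\<^sub>m (2^n)"
proof -
  obtain m x z where P: "x < 2^n" "P = \<i> ^ m \<cdot>\<^sub>m pauliXZ n x z"
    using assms by (rule pauli_groupE)
  have "cnj (\<i> ^ m) * \<i> ^ m = 1"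
    by (simp only: cnj_mult_self_eq_1_iff norm_power norm_ii power_one)
  then show "adj P * P = 1\<^sub>m (2^n)" "P * adj P = 1\<^sub>m (2^n)"
    unfolding P(2) mat_adjoint_smult using P(1)
    by (simp_all add: smult_mult_smult_mat[of _ "2^n" "2^n" _ "2^n"] pauliXZ_unitary mult.commute)
qed

lemma pauli_group_nonzero: "P \<in> pauli_group n \<Longrightarrow> P \<noteq> 0\<^sub>m (2^n) (2^n)"
  using pauli_group_unitary(1)[of P n] one_mat_neq_zero[of "2^n"] by auto

lemma pauli_group_commute_or_anticommute:
  assumes "P \<in> pauli_group n" "Q \<in> pauli_group n"
  shows "\<exists>s. (s = 1 \<or> s = -1) \<and> P * Q = s \<cdot>\<^sub>m (Q * P)"
proof -
  obtain m x z where P: "x < 2^n" "P = \<i> ^ m \<cdot>\<^sub>m pauliXZ n x z" using assms(1) by (rule pauli_groupE)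
  obtain m' x' z' where Q: "x' < 2^n" "Q = \<i> ^ m' \<cdot>\<^sub>m pauliXZ n x' z'" using assms(2) by (rule pauli_groupE)
  let ?c = "\<i> ^ m * \<i> ^ m'" and ?R = "pauliXZ n (xor x x') (xor z z')"
  have PQ: "P * Q = (?c * parity_sign n (and z x')) \<cdot>\<^sub>m ?R"
    unfolding P(2) Q(2) using P Q
    by (simp add: smult_mult_smult_mat[of _ "2^n" "2^n" _ "2^n"] pauliXZ_mult smult_smult_mat)
  have QP: "Q * P = (?c * parity_sign n (and z' x)) \<cdot>\<^sub>m ?R"
    unfolding P(2) Q(2) using P Q
    by (simp add: smult_mult_smult_mat[of _ "2^n" "2^n" _ "2^n"] pauliXZ_mult smult_smult_mat
        xor.commute mult.commute)
  let ?s = "parity_sign n (and z x') * parity_sign n (and z' x)"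
  have s: "?s * (?c * parity_sign n (and z' x)) = ?c * parity_sign n (and z x')"
    using parity_sign_square[of n "and z' x"] by (simp add: ac_simps)
  have "P * Q = ?s \<cdot>\<^sub>m (Q * P)" unfolding PQ QP smult_smult_mat s ..
  moreover have "?s = 1 \<or> ?s = -1"
    using parity_sign_cases[of n "and z x'"] parity_sign_cases[of n "and z' x"] by auto
  ultimately show ?thesis by blast
qed

text \<open>If bit \<open>i\<close> of \<open>z\<close> is set, flipping bit \<open>i\<close> of \<open>a\<close> flips the sign, so the signs cancel.\<close>

lemma sum_parity_sign_and_eq_0:
  assumes z: "z < 2^n" "z \<noteq> 0"
  shows "(\<Sum>a<2^n. parity_sign n (and z a)) = 0"
proof -
  obtain i where bi: "bit z i" using z(2) bit_eqI[of z 0] by auto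
  have i: "i < n" using bit_imp_less_exp[OF z(1) bi] .
  have flip: "bij_betw (\<lambda>a. xor a (2^i)) {..<2^n} {..<(2::nat)^n}"
    by (rule bij_betw_byWitness[where f' = "\<lambda>a. xor a (2^i)"])
      (use i in \<open>auto intro!: xor_less_exp\<close>)
  have "and z (2^i) = 2^i" using bi by (intro bit_eqI) (auto simp: bit_simps)
  moreover have "parity_sign n (2^i) = -1"
    using i unfolding parity_sign_def popcnt_def by (simp add: bit_exp_iff conj_commute cong: conj_cong)
  ultimately have "\<And>a. parity_sign n (and z (xor a (2^i))) = - parity_sign n (and z a)"
    by (simp add: and_xor_distrib_left parity_sign_xor)
  then have "(\<Sum>a<2^n. - parity_sign n (and z a)) = (\<Sum>a<2^n. parity_sign n (and z a))"
    using sum.reindex_bij_betw[OF flip, of "\<lambda>a. parity_sign n (and z a)"] by simp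
  then show ?thesis by (simp add: sum_negf)
qed

lemma pauli_group_scalar_or_traceless:
  assumes "P \<in> pauli_group n"
  shows "(\<exists>c. P = c \<cdot>\<^sub>m 1\<^sub>m (2^n)) \<or> mtrace P = 0"
proof -
  obtain m x z where P: "x < 2^n" "z < 2^n" "P = \<i> ^ m \<cdot>\<^sub>m pauliXZ n x z"
    using assms by (rule pauli_groupE)
  consider "x = 0" "z = 0" | "x = 0" "z \<noteq> 0" | "x \<noteq> 0" by blast
  then show ?thesis
  proof cases
    case 1
    then show ?thesis using P by (auto simp: pauliXZ_0_0)
  next
    case 2
    have "mtrace P = \<i> ^ m * (\<Sum>a<2^n. parity_sign n (and z a))"
      unfolding mtrace_def P(3) using 2 by (simp add: index_pauliXZ sum_distrib_left)
    then show ?thesis using sum_parity_sign_and_eq_0[OF P(2) 2(2)] by simp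
  next
    case 3
    then have "\<And>a. a \<noteq> xor a x" by (metis xor_self_eq xor.left_neutral xor.assoc)
    then show ?thesis unfolding mtrace_def P(3) by (simp add: index_pauliXZ)
  qed
qed

section \<open>The gauge group and its characters\<close>

lemma grp_iff: "g \<in> grp n k \<longleftrightarrow> g < 2^(n-k)"
  unfolding grp_def by simp

lemma zero_in_grp: "0 \<in> grp n k"
  unfolding grp_def by simp

lemma xor_in_grp: "g \<in> grp n k \<Longrightarrow> h \<in> grp n k \<Longrightarrow> xor g h \<in> grp n k"
  unfolding grp_def by (simp add: xor_less_exp)

lemma finite_grp: "finite (grp n k)"
  unfolding grp_def by simp

lemma card_grp: "card (grp n k) = 2^(n-k)"
  unfolding grp_def by simp

lemma set_upt_eq_grp: "set [0..<2^(n-k)] = grp n k"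
  unfolding grp_def by auto

lemma bij_betw_xor_grp: "h \<in> grp n k \<Longrightarrow> bij_betw (xor h) (grp n k) (grp n k)"
  by (rule bij_betw_byWitness[where f' = "xor h"]) (auto simp: xor.assoc[symmetric] xor_in_grp)

lemma chars_values: "\<chi> \<in> chars n k \<Longrightarrow> \<chi> g = 1 \<or> \<chi> g = -1"
  unfolding chars_def by (cases "g \<in> grp n k") auto

lemma chars_xor: "\<chi> \<in> chars n k \<Longrightarrow> g \<in> grp n k \<Longrightarrow> h \<in> grp n k \<Longrightarrow> \<chi> (xor g h) = \<chi> g * \<chi> h"
  unfolding chars_def by blast

lemma chars_outside: "\<chi> \<in> chars n k \<Longrightarrow> g \<notin> grp n k \<Longrightarrow> \<chi> g = 1"
  unfolding chars_def by blast

lemma chars_square: "\<chi> \<in> chars n k \<Longrightarrow> \<chi> g * \<chi> g = 1"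
  using chars_values[of \<chi> n k g] by auto

lemma cnj_chars [simp]: "\<chi> \<in> chars n k \<Longrightarrow> cnj (\<chi> g) = \<chi> g"
  using chars_values[of \<chi> n k g] by auto

lemma chars_zero: "\<chi> \<in> chars n k \<Longrightarrow> \<chi> 0 = 1"
  using chars_xor[OF _ zero_in_grp zero_in_grp, of \<chi> n k] chars_values[of \<chi> n k 0] by auto

lemma triv_char_in_chars: "triv_char \<in> chars n k"
  unfolding chars_def triv_char_def by simp

lemma chars_eqI:
  "\<chi> \<in> chars n k \<Longrightarrow> \<psi> \<in> chars n k \<Longrightarrow> (\<And>g. g \<in> grp n k \<Longrightarrow> \<chi> g = \<psi> g) \<Longrightarrow> \<chi> = \<psi>"
  by (rule ext) (metis chars_outside)

lemma chars_mult:
  assumes "\<chi> \<in> chars n k" "\<psi> \<in> chars n k"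
  shows "(\<lambda>g. \<chi> g * \<psi> g) \<in> chars n k"
proof -
  have "\<chi> g * \<psi> g = 1 \<or> \<chi> g * \<psi> g = -1" for g
    using chars_values[OF assms(1), of g] chars_values[OF assms(2), of g] by auto
  then show ?thesis
    using chars_xor[OF assms(1)] chars_xor[OF assms(2)] chars_outside[OF assms(1)]
      chars_outside[OF assms(2)] unfolding chars_def by (simp add: ac_simps)
qed

lemma chars_mult_eq_triv_iff:
  assumes "\<chi> \<in> chars n k" "\<psi> \<in> chars n k"
  shows "(\<lambda>g. \<chi> g * \<psi> g) = triv_char \<longleftrightarrow> \<chi> = \<psi>"
proof
  assume "(\<lambda>g. \<chi> g * \<psi> g) = triv_char"
  then have "\<chi> g * \<psi> g * \<psi> g = \<psi> g" for g by (metis triv_char_def mult_1)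
  then show "\<chi> = \<psi>" using chars_square[OF assms(2)] by (metis mult.assoc mult_1_right ext)
qed (use chars_square[OF assms(2)] in \<open>auto simp: triv_char_def\<close>)

lemma sum_chars:
  assumes \<chi>: "\<chi> \<in> chars n k"
  shows "(\<Sum>g\<in>grp n k. \<chi> g) = (if \<chi> = triv_char then of_nat (card (grp n k)) else 0)"
proof (cases "\<chi> = triv_char")
  case False
  then obtain h where h: "h \<in> grp n k" "\<chi> h = -1"
    using chars_eqI[OF \<chi> triv_char_in_chars] chars_values[OF \<chi>] unfolding triv_char_def by metis
  have "(\<Sum>g\<in>grp n k. \<chi> (xor h g)) = (\<Sum>g\<in>grp n k. \<chi> g)"
    by (rule sum.reindex_bij_betw[OF bij_betw_xor_grp[OF h(1)]])
  moreover have "(\<Sum>g\<in>grp n k. \<chi> (xor h g)) = (\<Sum>g\<in>grp n k. - \<chi> g)"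
    by (rule sum.cong) (simp_all add: chars_xor[OF \<chi> h(1)] h(2))
  ultimately show ?thesis using False by (simp add: sum_negf)
qed (simp add: triv_char_def)

lemma chars_orthogonal:
  assumes "\<chi> \<in> chars n k" "\<psi> \<in> chars n k"
  shows "(\<Sum>g\<in>grp n k. \<chi> g * \<psi> g) = (if \<chi> = \<psi> then of_nat (card (grp n k)) else 0)"
  using sum_chars[OF chars_mult[OF assms]] chars_mult_eq_triv_iff[OF assms] by simp

text \<open>A character is determined by its values on the generators \<open>2\<^sup>i\<close>, \<open>i < n - k\<close>: clearing the
  highest set bit of \<open>g\<close> gives a smaller element of the group.\<close>

lemma chars_eq_if_eq_on_generators:
  assumes \<chi>: "\<chi> \<in> chars n k" and \<psi>: "\<psi> \<in> chars n k"
    and gen: "\<And>i. i < n - k \<Longrightarrow> \<chi> (2^i) = \<psi> (2^i)"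
  shows "\<chi> = \<psi>"
proof (rule chars_eqI[OF \<chi> \<psi>])
  fix g show "g \<in> grp n k \<Longrightarrow> \<chi> g = \<psi> g"
  proof (induction g rule: less_induct)
    case (less g)
    show ?case
    proof (cases "g = 0")
      case True
      then show ?thesis using chars_zero[OF \<chi>] chars_zero[OF \<psi>] by simp
    next
      case False
      then obtain i where bi: "bit g i" using bit_eqI[of g 0] by auto
      have i: "i < n - k" using bit_imp_less_exp[OF _ bi] less.prems by (simp add: grp_iff)
      then have pG: "2^i \<in> grp n k" by (simp add: grp_iff)
      define g' where "g' = xor g (2^i)"
      have g': "g' \<in> grp n k" unfolding g'_def using less.prems pG by (rule xor_in_grp)
      have "g' + 2^i = or g' (2^i)"
        unfolding g'_def by (rule disjunctive_add) (use bi in \<open>auto simp: bit_simps\<close>)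
      also have "\<dots> = g" unfolding g'_def by (rule bit_eqI) (use bi in \<open>auto simp: bit_simps\<close>)
      finally have "g' + 2^i = g" .
      then have "g' < g" using zero_less_power[of "2::nat" i] by linarith
      then have IH: "\<chi> g' = \<psi> g'" using less.IH g' by blast
      have g_eq: "g = xor g' (2^i)" unfolding g'_def by simp
      show ?thesis
        unfolding g_eq chars_xor[OF \<chi> g' pG] chars_xor[OF \<psi> g' pG] IH gen[OF i] ..
    qed
  qed
qed

lemma finite_chars: "finite (chars n k)"
  and card_chars_le: "card (chars n k) \<le> 2^(n-k)"
proof -
  let ?f = "\<lambda>\<chi>. restrict (\<lambda>i. \<chi> (2^i)) {..<n-k}"
  let ?B = "PiE {..<n-k} (\<lambda>_. {1, -1 :: complex})"
  have inj: "inj_on ?f (chars n k)"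
  proof (rule inj_onI)
    fix \<chi> \<psi> assume c: "\<chi> \<in> chars n k" "\<psi> \<in> chars n k" and eq: "?f \<chi> = ?f \<psi>"
    show "\<chi> = \<psi>"
    proof (rule chars_eq_if_eq_on_generators[OF c])
      fix i assume "i < n - k"
      then show "\<chi> (2^i) = \<psi> (2^i)" using fun_cong[OF eq, of i] by simp
    qed
  qed
  have sub: "?f ` chars n k \<subseteq> ?B"
  proof (rule image_subsetI)
    fix \<chi> assume "\<chi> \<in> chars n k"
    then show "?f \<chi> \<in> ?B" unfolding PiE_iff using chars_values by auto
  qed
  show "finite (chars n k)"
    using inj sub by (rule inj_on_finite) (simp add: finite_PiE)
  have "card (chars n k) \<le> card ?B" by (rule card_inj_on_le[OF inj sub]) (simp add: finite_PiE)
  also have "card ?B = 2^(n-k)" by (simp add: card_PiE numeral_2_eq_2)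
  finally show "card (chars n k) \<le> 2^(n-k)" .
qed

section \<open>Charge projections\<close>

locale pauli_gauge =
  fixes n k :: nat and U :: "nat \<Rightarrow> complex mat"
  assumes rep: "pauli_rep n k U"
begin

abbreviation "N \<equiv> (2::nat)^n"
abbreviation "G \<equiv> grp n k"
abbreviation "Pi_pn \<equiv> Ppn n k U"
abbreviation "Proj \<equiv> Pchi n k U"

text \<open>With all dimensions fixed to \<open>N\<close> the carrier premises contain no unknowns, so the
  simplifier can use associativity.\<close>

lemma assoc_mult_N:
  "A \<in> carrier_mat N N \<Longrightarrow> B \<in> carrier_mat N N \<Longrightarrow> C \<in> carrier_mat N N \<Longrightarrow>
   A * B * C = A * (B * (C::complex mat))"
  by (rule assoc_mult_mat)

lemma U_pauli: "g \<in> G \<Longrightarrow> U g \<in> pauli_group n"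
  using rep unfolding pauli_rep_def by blast

lemma U_carrier: "g \<in> G \<Longrightarrow> U g \<in> carrier_mat N N"
  using pauli_group_carrier U_pauli by blast

lemma U_xor: "g \<in> G \<Longrightarrow> h \<in> G \<Longrightarrow> U (xor g h) = U g * U h"
  using rep unfolding pauli_rep_def by blast

lemma U_unitary: "g \<in> G \<Longrightarrow> adj (U g) * U g = 1\<^sub>m N" "g \<in> G \<Longrightarrow> U g * adj (U g) = 1\<^sub>m N"
  using pauli_group_unitary U_pauli by blast+

lemma U_zero: "U 0 = 1\<^sub>m N"
proof -
  have c: "U 0 \<in> carrier_mat N N" using U_carrier zero_in_grp by blast
  have "adj (U 0) * U 0 = adj (U 0) * (U 0 * U 0)" using U_xor[OF zero_in_grp zero_in_grp] by simp
  also have "\<dots> = adj (U 0) * U 0 * U 0" by (rule assoc_mult_N[symmetric]) (use c in auto)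
  finally show ?thesis using U_unitary(1)[OF zero_in_grp] c by simp
qed

lemma U_square: "g \<in> G \<Longrightarrow> U g * U g = 1\<^sub>m N"
  using U_xor[of g g] U_zero by simp

lemma U_adjoint: assumes "g \<in> G" shows "adj (U g) = U g"
proof -
  have c: "U g \<in> carrier_mat N N" using U_carrier assms by blast
  have "adj (U g) = adj (U g) * (U g * U g)" using U_square[OF assms] c by simp
  also have "\<dots> = adj (U g) * U g * U g" by (rule assoc_mult_N[symmetric]) (use c in auto)
  also have "\<dots> = U g" using U_unitary(1)[OF assms] c by simp
  finally show ?thesis .
qed

lemma Proj_eq_mat_sum: "Proj \<chi> = mat_sum N (\<lambda>g. (\<chi> g / of_nat (card G)) \<cdot>\<^sub>m U g) G"
proof -
  have "msum N (map (\<lambda>g. \<chi> g \<cdot>\<^sub>m U g) [0..<2^(n-k)]) = mat_sum N (\<lambda>g. \<chi> g \<cdot>\<^sub>m U g) G"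
    using msum_eq_mat_sum[of "[0..<2^(n-k)]" "\<lambda>g. \<chi> g \<cdot>\<^sub>m U g" N] U_carrier
    unfolding set_upt_eq_grp by simp
  then have "Proj \<chi> = (1 / of_nat (card G)) \<cdot>\<^sub>m mat_sum N (\<lambda>g. \<chi> g \<cdot>\<^sub>m U g) G"
    unfolding Pchi_def by simp
  also have "\<dots> = mat_sum N (\<lambda>g. (\<chi> g / of_nat (card G)) \<cdot>\<^sub>m U g) G"
    using U_carrier by (simp add: smult_mat_sum smult_smult_mat cong: mat_sum_cong)
  finally show ?thesis .
qed

lemma Pi_pn_eq_Proj: "Pi_pn = Proj triv_char"
  unfolding Ppn_def Pchi_def triv_char_def by simp

lemma Proj_carrier [simp]: "Proj \<chi> \<in> carrier_mat N N"
  and Proj_dim [simp]: "dim_row (Proj \<chi>) = N" "dim_col (Proj \<chi>) = N"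
  unfolding Proj_eq_mat_sum by simp_all

lemma Pi_pn_carrier [simp]: "Pi_pn \<in> carrier_mat N N"
  and Pi_pn_dim [simp]: "dim_row Pi_pn = N" "dim_col Pi_pn = N"
  unfolding Pi_pn_eq_Proj by simp_all

lemma U_mult_Proj:
  assumes h: "h \<in> G" and \<chi>: "\<chi> \<in> chars n k"
  shows "U h * Proj \<chi> = \<chi> h \<cdot>\<^sub>m Proj \<chi>"
proof -
  let ?c = "\<lambda>g. \<chi> g / of_nat (card G)"
  have "U h * Proj \<chi> = mat_sum N (\<lambda>g. ?c g \<cdot>\<^sub>m U (xor h g)) G"
    unfolding Proj_eq_mat_sum using h U_carrier
    by (simp add: mult_mat_sum mult_smult_distrib[of _ N N _ N] U_xor cong: mat_sum_cong)
  also have "\<dots> = mat_sum N (\<lambda>g. (\<chi> h * ?c (xor h g)) \<cdot>\<^sub>m U (xor h g)) G"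
    using chars_xor[OF \<chi> h] chars_square[OF \<chi>, of h]
    by (intro mat_sum_cong) (simp add: mult.assoc[symmetric])
  also have "\<dots> = mat_sum N (\<lambda>g. (\<chi> h * ?c g) \<cdot>\<^sub>m U g) G"
    by (rule mat_sum_reindex[OF bij_betw_xor_grp[OF h]])
  also have "\<dots> = \<chi> h \<cdot>\<^sub>m Proj \<chi>"
    unfolding Proj_eq_mat_sum using U_carrier
    by (simp add: smult_mat_sum smult_smult_mat cong: mat_sum_cong)
  finally show ?thesis .
qed

lemma Proj_adjoint: "\<chi> \<in> chars n k \<Longrightarrow> adj (Proj \<chi>) = Proj \<chi>"
  unfolding Proj_eq_mat_sum using U_carrier
  by (simp add: mat_adjoint_mat_sum mat_adjoint_smult U_adjoint cong: mat_sum_cong)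

lemma Proj_mult:
  assumes \<chi>: "\<chi> \<in> chars n k" and \<psi>: "\<psi> \<in> chars n k"
  shows "Proj \<chi> * Proj \<psi> = (if \<chi> = \<psi> then Proj \<psi> else 0\<^sub>m N N)"
proof -
  have "Proj \<chi> * Proj \<psi> = mat_sum N (\<lambda>g. (\<chi> g * \<psi> g / of_nat (card G)) \<cdot>\<^sub>m Proj \<psi>) G"
    unfolding Proj_eq_mat_sum[of \<chi>] using U_carrier
    by (simp add: mat_sum_mult mult_smult_assoc_mat[of _ N N _ N] U_mult_Proj \<psi> smult_smult_mat
        cong: mat_sum_cong)
  also have "\<dots> = (\<Sum>g\<in>G. \<chi> g * \<psi> g / of_nat (card G)) \<cdot>\<^sub>m Proj \<psi>"
    by (simp add: mat_sum_smult_const)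
  also have "(\<Sum>g\<in>G. \<chi> g * \<psi> g / of_nat (card G)) = (if \<chi> = \<psi> then 1 else 0)"
    using chars_orthogonal[OF \<chi> \<psi>] card_grp[of n k] by (simp add: sum_divide_distrib[symmetric])
  finally show ?thesis by simp
qed

lemma Pi_pn_adjoint: "adj Pi_pn = Pi_pn"
  unfolding Pi_pn_eq_Proj using Proj_adjoint triv_char_in_chars by simp

lemma Pi_pn_idem: "Pi_pn * Pi_pn = Pi_pn"
  unfolding Pi_pn_eq_Proj using Proj_mult[OF triv_char_in_chars triv_char_in_chars] by simp

lemma Proj_mult_charged:
  assumes X: "X \<in> carrier_mat N N"
    and comm: "\<And>g. g \<in> G \<Longrightarrow> U g * X = \<chi> g \<cdot>\<^sub>m (X * U g)"
  shows "Proj \<psi> * X = X * Proj (\<lambda>g. \<psi> g * \<chi> g)"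
proof -
  have "Proj \<psi> * X = mat_sum N (\<lambda>g. (\<psi> g / of_nat (card G)) \<cdot>\<^sub>m (U g * X)) G"
    unfolding Proj_eq_mat_sum[of \<psi>] using U_carrier X
    by (simp add: mat_sum_mult mult_smult_assoc_mat[of _ N N _ N] cong: mat_sum_cong)
  also have "\<dots> = mat_sum N (\<lambda>g. X * ((\<psi> g * \<chi> g / of_nat (card G)) \<cdot>\<^sub>m U g)) G"
    using U_carrier X by (simp add: comm mult_smult_distrib[of _ N N _ N] smult_smult_mat cong: mat_sum_cong)
  also have "\<dots> = X * Proj (\<lambda>g. \<psi> g * \<chi> g)"
    unfolding Proj_eq_mat_sum using U_carrier X by (simp add: mult_mat_sum)
  finally show ?thesis .
qed

lemma Proj_mult_charged_mult_Pi_pn: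
  assumes X: "X \<in> carrier_mat N N" and \<chi>: "\<chi> \<in> chars n k" and \<psi>: "\<psi> \<in> chars n k"
    and comm: "\<And>g. g \<in> G \<Longrightarrow> U g * X = \<chi> g \<cdot>\<^sub>m (X * U g)"
  shows "Proj \<psi> * X * Pi_pn = (if \<psi> = \<chi> then X * Pi_pn else 0\<^sub>m N N)"
proof -
  have "Proj \<psi> * X * Pi_pn = X * (Proj (\<lambda>g. \<psi> g * \<chi> g) * Proj triv_char)"
    using X by (simp add: Proj_mult_charged[OF X comm] Pi_pn_eq_Proj assoc_mult_N)
  then show ?thesis
    using Proj_mult[OF chars_mult[OF \<psi> \<chi>] triv_char_in_chars] chars_mult_eq_triv_iff[OF \<psi> \<chi>] X
    by (simp add: Pi_pn_eq_Proj)
qed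

text \<open>Faithfulness and \<open>-I \<notin> U(G)\<close> make every \<open>U\<^sup>g\<close>, \<open>g \<noteq> 0\<close>, traceless, so \<open>tr \<Pi>\<^sub>p\<^sub>n = 2\<^sup>k\<close>.\<close>

lemma U_traceless:
  assumes g: "g \<in> G" "g \<noteq> 0"
  shows "mtrace (U g) = 0"
proof -
  have "U g \<noteq> c \<cdot>\<^sub>m 1\<^sub>m N" for c
  proof
    assume c: "U g = c \<cdot>\<^sub>m 1\<^sub>m N"
    then have "(c * c) \<cdot>\<^sub>m 1\<^sub>m N = 1 \<cdot>\<^sub>m (1\<^sub>m N :: complex mat)"
      using U_square[OF g(1)] by (simp add: smult_mult_smult_mat[of _ N N _ N])
    moreover have "1\<^sub>m N \<noteq> (0\<^sub>m N N :: complex mat)" by (rule one_mat_neq_zero) simp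
    ultimately have "c * c = 1" using smult_mat_cancel[OF one_carrier_mat] by blast
    then have "c = 1 \<or> c = -1" by (simp add: square_eq_1_iff)
    moreover have "U g \<noteq> U 0"
      using rep g zero_in_grp unfolding pauli_rep_def inj_on_def by metis
    moreover have "U g \<noteq> - 1\<^sub>m N" using rep g unfolding pauli_rep_def by (metis image_eqI)
    ultimately show False using c U_zero by (auto simp: minus_one_smult_mat)
  qed
  then show ?thesis using pauli_group_scalar_or_traceless[OF U_pauli[OF g(1)]] by blast
qed

lemma mtrace_Pi_pn: "mtrace Pi_pn = of_nat N / of_nat (card G)"
proof -
  have "mtrace Pi_pn = (\<Sum>g\<in>G. mtrace ((1 / of_nat (card G)) \<cdot>\<^sub>m U g))"
    unfolding Pi_pn_eq_Proj Proj_eq_mat_sum triv_char_def using U_carrier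
    by (simp add: mtrace_mat_sum)
  also have "\<dots> = (\<Sum>g\<in>G. if g = 0 then of_nat N / of_nat (card G) else 0)"
  proof (rule sum.cong)
    fix g assume "g \<in> G"
    then show "mtrace ((1 / of_nat (card G)) \<cdot>\<^sub>m U g) = (if g = 0 then of_nat N / of_nat (card G) else 0)"
      using mtrace_smult[OF U_carrier] by (simp add: U_zero mtrace_one U_traceless)
  qed simp
  also have "\<dots> = of_nat N / of_nat (card G)" using zero_in_grp finite_grp by simp
  finally show ?thesis .
qed

lemma Pi_pn_nonzero: "Pi_pn \<noteq> 0\<^sub>m N N"
proof
  assume "Pi_pn = 0\<^sub>m N N"
  then have "mtrace Pi_pn = 0" unfolding mtrace_def by simp
  then show False using mtrace_Pi_pn card_grp[of n k] by simp
qed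

section \<open>Charges of Pauli operators\<close>

lemma Cset_pauli: "E \<in> Cset n k U \<chi> \<Longrightarrow> E \<in> pauli_group n"
  unfolding Cset_def by blast

lemma Cset_conj: "E \<in> Cset n k U \<chi> \<Longrightarrow> g \<in> G \<Longrightarrow> U g * E * adj (U g) = \<chi> g \<cdot>\<^sub>m E"
  unfolding Cset_def by blast

lemma conj_imp_commute:
  assumes g: "g \<in> G" and X: "X \<in> carrier_mat N N" and conj: "U g * X * adj (U g) = c \<cdot>\<^sub>m X"
  shows "U g * X = c \<cdot>\<^sub>m (X * U g)"
proof -
  have Ug: "U g \<in> carrier_mat N N" using U_carrier[OF g] .
  have "U g * X = U g * X * (adj (U g) * U g)" using U_unitary(1)[OF g] X Ug by simp
  also have "\<dots> = (U g * X * adj (U g)) * U g" using X Ug by (simp add: assoc_mult_N)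
  also have "\<dots> = c \<cdot>\<^sub>m (X * U g)" unfolding conj using X Ug by (simp add: mult_smult_assoc_mat[of _ N N _ N])
  finally show ?thesis .
qed

lemma Cset_commute: "E \<in> Cset n k U \<chi> \<Longrightarrow> g \<in> G \<Longrightarrow> U g * E = \<chi> g \<cdot>\<^sub>m (E * U g)"
  by (rule conj_imp_commute) (auto simp: Cset_conj pauli_group_carrier Cset_pauli)

lemma conj_U_pauli:
  assumes g: "g \<in> G" and E: "E \<in> pauli_group n"
  shows "U g * E * adj (U g) = E \<or> U g * E * adj (U g) = - E"
proof -
  have Ug: "U g \<in> carrier_mat N N" and Ec: "E \<in> carrier_mat N N"
    using U_carrier[OF g] pauli_group_carrier[OF E] .
  obtain s where s: "s = 1 \<or> s = -1" "U g * E = s \<cdot>\<^sub>m (E * U g)"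
    using pauli_group_commute_or_anticommute[OF U_pauli[OF g] E] by blast
  have "U g * E * adj (U g) = s \<cdot>\<^sub>m (E * U g * adj (U g))"
    unfolding s(2) using Ug Ec by (simp add: mult_smult_assoc_mat[of _ N N _ N])
  also have "E * U g * adj (U g) = E" using Ug Ec U_unitary(2)[OF g] by (simp add: assoc_mult_N)
  finally show ?thesis using s(1) by (auto simp: minus_one_smult_mat)
qed

text \<open>The charge of a Pauli operator records, for each \<open>g\<close>, whether it commutes or anticommutes
  with \<open>U\<^sup>g\<close>; multiplicativity follows from \<open>U\<^sup>g\<^sup>\<oplus>\<^sup>h = U\<^sup>g U\<^sup>h\<close>.\<close>

lemma pauli_has_charge:
  assumes E: "E \<in> pauli_group n"
  shows "\<exists>\<chi>\<in>chars n k. E \<in> Cset n k U \<chi>"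
proof -
  have Ec: "E \<in> carrier_mat N N" and Enz: "E \<noteq> 0\<^sub>m N N"
    using pauli_group_carrier[OF E] pauli_group_nonzero[OF E] .
  define \<chi> where "\<chi> g = (if g \<in> G \<and> U g * E * adj (U g) \<noteq> E then -1 else (1::complex))" for g
  have conj: "U g * E * adj (U g) = \<chi> g \<cdot>\<^sub>m E" if g: "g \<in> G" for g
    using conj_U_pauli[OF g E] by (auto simp: \<chi>_def g minus_one_smult_mat)
  have cancel: "a \<cdot>\<^sub>m E = b \<cdot>\<^sub>m E \<Longrightarrow> a = b" for a b by (rule smult_mat_cancel[OF Ec Enz])
  have "\<chi> (xor g h) = \<chi> g * \<chi> h" if g: "g \<in> G" and h: "h \<in> G" for g h
  proof (rule cancel)
    have Ug: "U g \<in> carrier_mat N N" and Uh: "U h \<in> carrier_mat N N" using U_carrier g h by auto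
    have "adj (U (xor g h)) = adj (U h) * adj (U g)" unfolding U_xor[OF g h] by (rule mat_adjoint_mult[OF Ug Uh])
    then have "\<chi> (xor g h) \<cdot>\<^sub>m E = U g * (U h * E * adj (U h)) * adj (U g)"
      using conj[OF xor_in_grp[OF g h]] Ug Uh Ec by (simp add: U_xor[OF g h] assoc_mult_N)
    also have "\<dots> = \<chi> h \<cdot>\<^sub>m (U g * E * adj (U g))"
      unfolding conj[OF h] using Ug Ec by (simp add: mult_smult_assoc_mat[of _ N N _ N] mult_smult_distrib[of _ N N _ N])
    finally show "\<chi> (xor g h) \<cdot>\<^sub>m E = (\<chi> g * \<chi> h) \<cdot>\<^sub>m E"
      unfolding conj[OF g] by (simp add: smult_smult_mat mult.commute)
  qed
  then have "\<chi> \<in> chars n k" unfolding chars_def by (auto simp: \<chi>_def)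
  moreover have "E \<in> Cset n k U \<chi>" unfolding Cset_def using E conj by blast
  ultimately show ?thesis by blast
qed

lemma charge_unique:
  assumes "E \<in> Cset n k U \<chi>" "E \<in> Cset n k U \<psi>" "\<chi> \<in> chars n k" "\<psi> \<in> chars n k"
  shows "\<chi> = \<psi>"
proof (rule chars_eqI[OF assms(3,4)])
  fix g assume g: "g \<in> G"
  have E: "E \<in> pauli_group n" using Cset_pauli[OF assms(1)] .
  have "\<chi> g \<cdot>\<^sub>m E = \<psi> g \<cdot>\<^sub>m E" using Cset_conj[OF assms(1) g] Cset_conj[OF assms(2) g] by simp
  then show "\<chi> g = \<psi> g"
    by (rule smult_mat_cancel[OF pauli_group_carrier[OF E] pauli_group_nonzero[OF E]])
qed

definition charge :: "complex mat \<Rightarrow> nat \<Rightarrow> complex" where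
  "charge E = (SOME \<chi>. \<chi> \<in> chars n k \<and> E \<in> Cset n k U \<chi>)"

lemma charge_in_chars: "E \<in> pauli_group n \<Longrightarrow> charge E \<in> chars n k"
  and in_Cset_charge: "E \<in> pauli_group n \<Longrightarrow> E \<in> Cset n k U (charge E)"
  using someI_ex[OF pauli_has_charge[unfolded Bex_def]] unfolding charge_def by blast+

lemma charge_eqI: "E \<in> Cset n k U \<chi> \<Longrightarrow> \<chi> \<in> chars n k \<Longrightarrow> charge E = \<chi>"
  by (metis Cset_pauli charge_in_chars charge_unique in_Cset_charge)

lemma charge_one: "1\<^sub>m N \<in> pauli_group n \<Longrightarrow> charge (1\<^sub>m N) = triv_char"
  by (rule charge_eqI[OF _ triv_char_in_chars])
    (auto simp: Cset_def triv_char_def U_unitary(2) carrier_matD[OF U_carrier])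

lemma Proj_mult_pauli_mult_Pi_pn:
  assumes E: "E \<in> pauli_group n" and \<psi>: "\<psi> \<in> chars n k"
  shows "Proj \<psi> * (E * Pi_pn) = (if \<psi> = charge E then E * Pi_pn else 0\<^sub>m N N)"
proof -
  have "Proj \<psi> * E * Pi_pn = (if \<psi> = charge E then E * Pi_pn else 0\<^sub>m N N)"
    by (rule Proj_mult_charged_mult_Pi_pn[OF pauli_group_carrier[OF E] charge_in_chars[OF E] \<psi>])
      (rule Cset_commute[OF in_Cset_charge[OF E]])
  then show ?thesis using pauli_group_carrier[OF E] by (simp add: assoc_mult_N)
qed

lemma Proj_charge_mult_pauli_mult_Pi_pn:
  "E \<in> pauli_group n \<Longrightarrow> Proj (charge E) * (E * Pi_pn) = E * Pi_pn"
  using Proj_mult_pauli_mult_Pi_pn charge_in_chars by simp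

lemma pauli_mult_Pi_pn_isometry:
  assumes E: "E \<in> pauli_group n"
  shows "adj (E * Pi_pn) * (E * Pi_pn) = Pi_pn"
proof -
  have Ec: "E \<in> carrier_mat N N" using pauli_group_carrier[OF E] .
  have "adj (E * Pi_pn) * (E * Pi_pn) = Pi_pn * (adj E * E) * Pi_pn"
    using mat_adjoint_mult[OF Ec Pi_pn_carrier] Pi_pn_adjoint Ec by (simp add: assoc_mult_N)
  also have "\<dots> = Pi_pn" using pauli_group_unitary(1)[OF E] Pi_pn_idem by simp
  finally show ?thesis .
qed

lemma Pi_pn_mult_adjoint: "X \<in> carrier_mat N N \<Longrightarrow> Pi_pn * adj X = adj (X * Pi_pn)"
  using mat_adjoint_mult[OF _ Pi_pn_carrier] Pi_pn_adjoint by simp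

lemma sandwich_Pi_pn:
  assumes K: "K \<in> carrier_mat N N" and \<rho>: "\<rho> \<in> carrier_mat N N" and \<rho>Pi: "Pi_pn * \<rho> * Pi_pn = \<rho>"
  shows "K * \<rho> * adj K = (K * Pi_pn) * \<rho> * adj (K * Pi_pn)"
proof -
  have "(K * Pi_pn) * \<rho> * adj (K * Pi_pn) = K * Pi_pn * \<rho> * (Pi_pn * adj K)"
    using Pi_pn_mult_adjoint[OF K] by simp
  also have "\<dots> = K * (Pi_pn * \<rho> * Pi_pn) * adj K" using K \<rho> by (simp add: assoc_mult_N)
  finally show ?thesis using \<rho>Pi by simp
qed

lemma Pi_pn_adj_mult_Pi_pn:
  assumes "E \<in> carrier_mat N N" "F \<in> carrier_mat N N"
  shows "Pi_pn * adj E * F * Pi_pn = adj (E * Pi_pn) * (F * Pi_pn)"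
  using assms Pi_pn_mult_adjoint[of E] by (simp add: assoc_mult_N)

lemma Pi_pn_adj_mult_Pi_pn_charge_ne:
  assumes E: "E \<in> pauli_group n" and F: "F \<in> pauli_group n" and ne: "charge E \<noteq> charge F"
  shows "Pi_pn * adj E * F * Pi_pn = 0\<^sub>m N N"
proof -
  have Ec: "E \<in> carrier_mat N N" and Fc: "F \<in> carrier_mat N N" using E F pauli_group_carrier by blast+
  have cE: "charge E \<in> chars n k" and cF: "charge F \<in> chars n k" using E F charge_in_chars by blast+
  have "adj (E * Pi_pn) = adj (E * Pi_pn) * Proj (charge E)"
    using Ec mat_adjoint_mult[of "Proj (charge E)" N N "E * Pi_pn" N]
      Proj_charge_mult_pauli_mult_Pi_pn[OF E] Proj_adjoint[OF cE] by simp
  moreover have "Pi_pn * adj E * F * Pi_pn = adj (E * Pi_pn) * (F * Pi_pn)"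
    using Ec Fc by (rule Pi_pn_adj_mult_Pi_pn)
  ultimately have "Pi_pn * adj E * F * Pi_pn = adj (E * Pi_pn) * Proj (charge E) * (Proj (charge F) * (F * Pi_pn))"
    using Proj_charge_mult_pauli_mult_Pi_pn[OF F] by simp
  also have "\<dots> = adj (E * Pi_pn) * (Proj (charge E) * Proj (charge F)) * (F * Pi_pn)"
    using Ec Fc by (simp add: assoc_mult_N)
  also have "\<dots> = 0\<^sub>m N N" using Proj_mult[OF cE cF] ne Ec Fc by simp
  finally show ?thesis .
qed

lemma adj_mult_same_charge_commute:
  assumes E: "E \<in> Cset n k U \<chi>" and F: "F \<in> Cset n k U \<chi>" and \<chi>: "\<chi> \<in> chars n k" and g: "g \<in> G"
  shows "U g * (adj E * F) = triv_char g \<cdot>\<^sub>m (adj E * F * U g)"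
proof -
  have Ec: "E \<in> carrier_mat N N" and Fc: "F \<in> carrier_mat N N" and Ug: "U g \<in> carrier_mat N N"
    using pauli_group_carrier Cset_pauli E F U_carrier[OF g] by blast+
  have "adj (U g * E * adj (U g)) = U g * adj E * adj (U g)"
    using Ec Ug U_adjoint[OF g] by (simp add: mat_adjoint_mult[of _ N N _ N] assoc_mult_N)
  then have "U g * adj E * adj (U g) = \<chi> g \<cdot>\<^sub>m adj E"
    using Cset_conj[OF E g] \<chi> by (simp add: mat_adjoint_smult)
  then have a: "U g * adj E = \<chi> g \<cdot>\<^sub>m (adj E * U g)" using conj_imp_commute[OF g] Ec by simp
  have "U g * (adj E * F) = (U g * adj E) * F" using Ec Fc Ug by (simp add: assoc_mult_N)
  also have "\<dots> = \<chi> g \<cdot>\<^sub>m (adj E * (U g * F))" unfolding a using Ec Fc Ug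
    by (simp add: mult_smult_assoc_mat[of _ N N _ N] assoc_mult_N)
  also have "\<dots> = (\<chi> g * \<chi> g) \<cdot>\<^sub>m (adj E * F * U g)" unfolding Cset_commute[OF F g] using Ec Fc Ug
    by (simp add: mult_smult_distrib[of _ N N _ N] assoc_mult_N smult_smult_mat)
  finally show ?thesis using chars_square[OF \<chi>] unfolding triv_char_def by simp
qed

lemma same_charge_mult_Pi_pn:
  assumes E: "E \<in> pauli_group n" and F: "F \<in> pauli_group n" and same: "charge E = charge F"
    and C: "Pi_pn * adj E * F * Pi_pn = c \<cdot>\<^sub>m Pi_pn"
  shows "F * Pi_pn = c \<cdot>\<^sub>m (E * Pi_pn)" and "cmod c = 1"
proof -
  have Ec: "E \<in> carrier_mat N N" and Fc: "F \<in> carrier_mat N N" using E F pauli_group_carrier by blast+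
  have EF: "adj E * F \<in> carrier_mat N N" using Ec Fc by simp
  have "Pi_pn * (adj E * F) * Pi_pn = adj E * F * Pi_pn"
    using Proj_mult_charged_mult_Pi_pn[OF EF triv_char_in_chars triv_char_in_chars]
      adj_mult_same_charge_commute[OF in_Cset_charge[OF E] _ charge_in_chars[OF E]]
      in_Cset_charge[OF F] same
    by (simp add: Pi_pn_eq_Proj[symmetric])
  then have a: "adj E * F * Pi_pn = c \<cdot>\<^sub>m Pi_pn" using C Ec Fc by (simp add: assoc_mult_N)
  have "F * Pi_pn = E * adj E * F * Pi_pn" using pauli_group_unitary(2)[OF E] Fc by simp
  also have "\<dots> = E * (adj E * F * Pi_pn)" using Ec Fc by (simp add: assoc_mult_N)
  also have "\<dots> = c \<cdot>\<^sub>m (E * Pi_pn)" unfolding a using Ec by (simp add: mult_smult_distrib[of _ N N _ N])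
  finally show FE: "F * Pi_pn = c \<cdot>\<^sub>m (E * Pi_pn)" .
  have "1 \<cdot>\<^sub>m Pi_pn = adj (F * Pi_pn) * (F * Pi_pn)"
    using pauli_mult_Pi_pn_isometry[OF F] by simp
  also have "\<dots> = (cnj c * c) \<cdot>\<^sub>m Pi_pn" unfolding FE using Ec pauli_mult_Pi_pn_isometry[OF E]
    by (simp add: mat_adjoint_smult smult_mult_smult_mat[of _ N N _ N])
  finally have "1 = cnj c * c" by (rule smult_mat_cancel[OF Pi_pn_carrier Pi_pn_nonzero])
  then show "cmod c = 1" using cnj_mult_self_eq_1_iff by simp
qed

section \<open>The recovery channel\<close>

text \<open>Extending \<open>R\<close> by \<open>\<Pi>\<^sub>p\<^sub>n\<close> at the trivial character turns the two parts of \<^const>\<open>channelO\<close>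
  into one sum over all characters.\<close>

definition frame :: "((nat \<Rightarrow> complex) \<Rightarrow> complex mat) \<Rightarrow> (nat \<Rightarrow> complex) \<Rightarrow> complex mat" where
  "frame R \<chi> = (if \<chi> = triv_char then Pi_pn else R \<chi>)"

definition frame_combination :: "((nat \<Rightarrow> complex) \<Rightarrow> complex mat) \<Rightarrow> complex mat \<Rightarrow> bool" where
  "frame_combination R W \<longleftrightarrow> (\<exists>a. W = mat_sum N (\<lambda>\<chi>. a \<chi> \<cdot>\<^sub>m frame R \<chi>) (chars n k))"

definition frame_aligned :: "((nat \<Rightarrow> complex) \<Rightarrow> complex mat) \<Rightarrow> complex mat set \<Rightarrow> bool" where
  "frame_aligned R Es \<longleftrightarrow> (\<forall>E\<in>Es. (E \<in> Cset n k U triv_char \<longrightarrow>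
       (\<exists>\<eta>. cmod \<eta> = 1 \<and> E * Pi_pn = \<eta> \<cdot>\<^sub>m Pi_pn)) \<and>
     (\<forall>\<chi>\<in>chars n k - {triv_char}. E \<in> Cset n k U \<chi> \<longrightarrow>
       (\<exists>\<eta>. cmod \<eta> = 1 \<and> adj (R \<chi>) * E * Pi_pn = \<eta> \<cdot>\<^sub>m Pi_pn)))"

context
  fixes R assumes R: "complete_frames n k U R"
begin

lemma frame_carrier: "\<chi> \<in> chars n k \<Longrightarrow> frame R \<chi> \<in> carrier_mat N N"
  and frame_isometry: "\<chi> \<in> chars n k \<Longrightarrow> adj (frame R \<chi>) * frame R \<chi> = Pi_pn"
  and Proj_mult_frame_self: "\<chi> \<in> chars n k \<Longrightarrow> Proj \<chi> * frame R \<chi> = frame R \<chi>"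
  using R Pi_pn_adjoint Pi_pn_idem Pi_pn_eq_Proj
  unfolding frame_def complete_frames_def frame_field_def by auto

lemma Proj_mult_frame:
  assumes \<chi>: "\<chi> \<in> chars n k" and \<psi>: "\<psi> \<in> chars n k"
  shows "Proj \<psi> * frame R \<chi> = (if \<psi> = \<chi> then frame R \<chi> else 0\<^sub>m N N)"
proof -
  have "Proj \<psi> * frame R \<chi> = Proj \<psi> * Proj \<chi> * frame R \<chi>"
    using frame_carrier[OF \<chi>] Proj_mult_frame_self[OF \<chi>] by (simp add: assoc_mult_N)
  then show ?thesis using Proj_mult[OF \<psi> \<chi>] frame_carrier[OF \<chi>] Proj_mult_frame_self[OF \<chi>] by simp
qed

lemma frame_adjoint_mult_Proj:
  assumes \<chi>: "\<chi> \<in> chars n k"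
  shows "adj (frame R \<chi>) * Proj \<chi> = adj (frame R \<chi>)"
  using mat_adjoint_mult[OF Proj_carrier[of \<chi>] frame_carrier[OF \<chi>]] Proj_mult_frame_self[OF \<chi>]
    Proj_adjoint[OF \<chi>] by simp

lemma channelO_eq_mat_sum:
  assumes X: "X \<in> carrier_mat N N"
  shows "channelO n k U R X =
    mat_sum N (\<lambda>\<chi>. adj (frame R \<chi>) * Proj \<chi> * X * Proj \<chi> * frame R \<chi>) (chars n k)"
proof -
  let ?T = "\<lambda>\<chi>. adj (frame R \<chi>) * Proj \<chi> * X * Proj \<chi> * frame R \<chi>"
  have T: "\<chi> \<in> chars n k \<Longrightarrow> ?T \<chi> \<in> carrier_mat N N" for \<chi> using frame_carrier X by simp
  have Rc: "\<chi> \<in> chars n k - {triv_char} \<Longrightarrow> adj (R \<chi>) * Proj \<chi> * X * Proj \<chi> * R \<chi> \<in> carrier_mat N N"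
    for \<chi> using T[of \<chi>] by (simp add: frame_def)
  have "msumS N (\<lambda>\<chi>. adj (R \<chi>) * Proj \<chi> * X * Proj \<chi> * R \<chi>) (chars n k - {triv_char})
      = mat_sum N ?T (chars n k - {triv_char})"
    using finite_chars by (subst msumS_eq_mat_sum) (auto simp: frame_def Rc cong: mat_sum_cong)
  moreover have "?T triv_char = Pi_pn * X * Pi_pn"
    unfolding frame_def using X by (simp add: Pi_pn_adjoint Pi_pn_idem Pi_pn_eq_Proj[symmetric] assoc_mult_N)
  moreover have "mat_sum N ?T (chars n k) = ?T triv_char + mat_sum N ?T (chars n k - {triv_char})"
    using mat_sum_insert[of "chars n k - {triv_char}" triv_char ?T N] finite_chars T triv_char_in_chars
    by (simp add: insert_absorb)
  ultimately show ?thesis unfolding channelO_def by simp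
qed

lemma channelO_add:
  assumes X: "X \<in> carrier_mat N N" and Y: "Y \<in> carrier_mat N N"
  shows "channelO n k U R (X + Y) = channelO n k U R X + channelO n k U R Y"
  using X Y frame_carrier
  by (simp add: channelO_eq_mat_sum mat_sum_add sandwich_add[of _ N] cong: mat_sum_cong)

lemma channelO_zero: "channelO n k U R (0\<^sub>m N N) = 0\<^sub>m N N"
  by (simp add: channelO_eq_mat_sum carrier_matD[OF frame_carrier] mat_sum_zero)

lemma aligned_error_mult_Pi_pn:
  assumes Es: "Es \<subseteq> pauli_group n" and aligned: "frame_aligned R Es"
    and E: "E \<in> Es" and \<chi>: "\<chi> \<in> chars n k" and E\<chi>: "E \<in> Cset n k U \<chi>"
  shows "\<exists>\<eta>. E * Pi_pn = \<eta> \<cdot>\<^sub>m frame R \<chi>"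
proof (cases "\<chi> = triv_char")
  case True
  then show ?thesis using aligned E E\<chi> unfolding frame_aligned_def frame_def by auto
next
  case False
  obtain \<eta> where \<eta>: "cmod \<eta> = 1" "adj (R \<chi>) * E * Pi_pn = \<eta> \<cdot>\<^sub>m Pi_pn"
    using aligned E E\<chi> \<chi> False unfolding frame_aligned_def by blast
  have Ec: "E \<in> carrier_mat N N" using Es E pauli_group_carrier by blast
  have R\<chi>: "frame R \<chi> = R \<chi>" unfolding frame_def using False by simp
  have "E * Pi_pn = \<eta> \<cdot>\<^sub>m R \<chi>"
  proof (rule eq_smult_if_overlap_phase[OF _ frame_carrier[OF \<chi>, unfolded R\<chi>]])
    show "adj (E * Pi_pn) * (E * Pi_pn) = Pi_pn"
      using Es E by (intro pauli_mult_Pi_pn_isometry) auto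
    show "adj (R \<chi>) * R \<chi> = Pi_pn" using frame_isometry[OF \<chi>] R\<chi> by simp
    show "adj (R \<chi>) * (E * Pi_pn) = \<eta> \<cdot>\<^sub>m Pi_pn"
      using \<eta>(2) Ec frame_carrier[OF \<chi>] R\<chi> by (simp add: assoc_mult_N)
  qed (use Ec \<eta>(1) in auto)
  then show ?thesis using R\<chi> by auto
qed

lemma frame_combination_zero: "frame_combination R (0\<^sub>m N N)"
  unfolding frame_combination_def
  by (rule exI[of _ "\<lambda>_. 0"]) (simp add: mat_sum_zero carrier_matD[OF frame_carrier])

lemma frame_combination_smult_add:
  assumes "frame_combination R W" and "frame_combination R W'"
  shows "frame_combination R (c \<cdot>\<^sub>m W + W')"
proof -
  obtain a a' where W: "W = mat_sum N (\<lambda>\<chi>. a \<chi> \<cdot>\<^sub>m frame R \<chi>) (chars n k)"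
    and W': "W' = mat_sum N (\<lambda>\<chi>. a' \<chi> \<cdot>\<^sub>m frame R \<chi>) (chars n k)"
    using assms unfolding frame_combination_def by blast
  have "c \<cdot>\<^sub>m W + W' = mat_sum N (\<lambda>\<chi>. (c * a \<chi> + a' \<chi>) \<cdot>\<^sub>m frame R \<chi>) (chars n k)"
    unfolding W W' using frame_carrier
    by (simp add: smult_mat_sum mat_sum_add smult_smult_mat add_smult_distrib_right_mat[OF frame_carrier]
        cong: mat_sum_cong)
  then show ?thesis unfolding frame_combination_def by (rule exI[where x = "\<lambda>\<chi>. c * a \<chi> + a' \<chi>"])
qed

lemma aligned_error_frame_combination:
  assumes Es: "Es \<subseteq> pauli_group n" and aligned: "frame_aligned R Es" and E: "E \<in> Es"
  shows "frame_combination R (E * Pi_pn)"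
proof -
  have Ep: "E \<in> pauli_group n" using Es E by blast
  obtain \<eta> where \<eta>: "E * Pi_pn = \<eta> \<cdot>\<^sub>m frame R (charge E)"
    using aligned_error_mult_Pi_pn[OF Es aligned E charge_in_chars[OF Ep] in_Cset_charge[OF Ep]] by blast
  have "E * Pi_pn = mat_sum N (\<lambda>\<chi>. (if \<chi> = charge E then \<eta> else 0) \<cdot>\<^sub>m frame R \<chi>) (chars n k)"
    unfolding \<eta> using charge_in_chars[OF Ep] frame_carrier
    by (subst mat_sum_single[of _ "charge E"]) (auto simp: finite_chars carrier_matD[OF frame_carrier])
  then show ?thesis
    unfolding frame_combination_def by (rule exI[where x = "\<lambda>\<chi>. if \<chi> = charge E then \<eta> else 0"])
qed

lemma span_frame_combination:
  assumes Es: "Es \<subseteq> pauli_group n" and aligned: "frame_aligned R Es" and K: "K \<in> mspan N Es"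
  shows "K \<in> carrier_mat N N" and "frame_combination R (K * Pi_pn)"
proof -
  obtain cs where K_eq: "K = msum N (map (\<lambda>(c,E). c \<cdot>\<^sub>m E) cs)" and cs: "set (map snd cs) \<subseteq> Es"
    using K unfolding mspan_def by blast
  from cs have "K \<in> carrier_mat N N \<and> frame_combination R (K * Pi_pn)"
    unfolding K_eq
  proof (induction cs)
    case Nil
    then show ?case using frame_combination_zero by (simp add: msum_def)
  next
    case (Cons ce cs)
    obtain c E where ce: "ce = (c,E)" by (cases ce)
    have E: "E \<in> Es" using Cons.prems ce by simp
    have Ec: "E \<in> carrier_mat N N" using Es E pauli_group_carrier by blast
    let ?K = "msum N (map (\<lambda>(c,E). c \<cdot>\<^sub>m E) cs)"
    have K': "?K \<in> carrier_mat N N" "frame_combination R (?K * Pi_pn)" using Cons by auto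
    have "(c \<cdot>\<^sub>m E + ?K) * Pi_pn = c \<cdot>\<^sub>m (E * Pi_pn) + ?K * Pi_pn"
      using Ec K' by (simp add: add_mult_distrib_mat[of _ N N _ _ N] mult_smult_assoc_mat[of _ N N _ N])
    then show ?case
      using ce Ec K' frame_combination_smult_add[OF aligned_error_frame_combination[OF Es aligned E]]
      by (simp add: msum_def)
  qed
  then show "K \<in> carrier_mat N N" "frame_combination R (K * Pi_pn)" by simp_all
qed

lemma Proj_mult_frame_combination:
  assumes \<psi>: "\<psi> \<in> chars n k"
  shows "Proj \<psi> * mat_sum N (\<lambda>\<chi>. a \<chi> \<cdot>\<^sub>m frame R \<chi>) (chars n k) = a \<psi> \<cdot>\<^sub>m frame R \<psi>"
proof -
  have "Proj \<psi> * mat_sum N (\<lambda>\<chi>. a \<chi> \<cdot>\<^sub>m frame R \<chi>) (chars n k) =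
      mat_sum N (\<lambda>\<chi>. Proj \<psi> * (a \<chi> \<cdot>\<^sub>m frame R \<chi>)) (chars n k)"
    by (rule mult_mat_sum) (simp_all add: frame_carrier)
  also have "\<dots> = mat_sum N (\<lambda>\<chi>. if \<chi> = \<psi> then a \<psi> \<cdot>\<^sub>m frame R \<psi> else 0\<^sub>m N N) (chars n k)"
    by (rule mat_sum_cong)
      (simp add: mult_smult_distrib[OF Proj_carrier frame_carrier] Proj_mult_frame \<psi>)
  also have "\<dots> = a \<psi> \<cdot>\<^sub>m frame R \<psi>"
    using finite_chars \<psi> frame_carrier by (subst mat_sum_single[of _ \<psi>]) auto
  finally show ?thesis .
qed

lemma frame_combination_gram:
  fixes a :: "(nat \<Rightarrow> complex) \<Rightarrow> complex"
  defines "W \<equiv> mat_sum N (\<lambda>\<chi>. a \<chi> \<cdot>\<^sub>m frame R \<chi>) (chars n k)"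
  shows "adj W * W = (\<Sum>\<chi>\<in>chars n k. cnj (a \<chi>) * a \<chi>) \<cdot>\<^sub>m Pi_pn"
proof -
  have W: "W \<in> carrier_mat N N" unfolding W_def by simp
  have frame_W: "adj (frame R \<chi>) * W = a \<chi> \<cdot>\<^sub>m Pi_pn" if \<chi>: "\<chi> \<in> chars n k" for \<chi>
  proof -
    have "adj (frame R \<chi>) * (Proj \<chi> * W) = adj (frame R \<chi>) * Proj \<chi> * W"
      by (rule assoc_mult_N[symmetric]) (use frame_carrier[OF \<chi>] W in auto)
    then have "adj (frame R \<chi>) * W = adj (frame R \<chi>) * (Proj \<chi> * W)"
      using frame_adjoint_mult_Proj[OF \<chi>] by simp
    then show ?thesis
      unfolding W_def Proj_mult_frame_combination[OF \<chi>] using frame_carrier[OF \<chi>] frame_isometry[OF \<chi>]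
      by (simp add: mult_smult_distrib[of _ N N _ N])
  qed
  have "adj W = mat_sum N (\<lambda>\<chi>. cnj (a \<chi>) \<cdot>\<^sub>m adj (frame R \<chi>)) (chars n k)"
    unfolding W_def using frame_carrier
    by (simp add: mat_adjoint_mat_sum mat_adjoint_smult cong: mat_sum_cong)
  then have "adj W * W = mat_sum N (\<lambda>\<chi>. (cnj (a \<chi>) \<cdot>\<^sub>m adj (frame R \<chi>)) * W) (chars n k)"
    using frame_carrier W by (simp add: mat_sum_mult)
  also have "\<dots> = mat_sum N (\<lambda>\<chi>. (cnj (a \<chi>) * a \<chi>) \<cdot>\<^sub>m Pi_pn) (chars n k)"
    using frame_carrier W
    by (intro mat_sum_cong) (simp add: mult_smult_assoc_mat[of _ N N _ N] frame_W smult_smult_mat)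
  finally show ?thesis by (simp add: mat_sum_smult_const)
qed

lemma channelO_sandwich_eq_mat_sum:
  assumes K: "K \<in> carrier_mat N N" and \<rho>: "\<rho> \<in> carrier_mat N N" and \<rho>Pi: "Pi_pn * \<rho> * Pi_pn = \<rho>"
  shows "channelO n k U R (K * \<rho> * adj K) = mat_sum N (\<lambda>\<chi>.
    adj (frame R \<chi>) * (Proj \<chi> * (K * Pi_pn)) * \<rho> * adj (Proj \<chi> * (K * Pi_pn)) * frame R \<chi>) (chars n k)"
  using K \<rho> frame_carrier
  by (simp add: sandwich_Pi_pn[OF K \<rho> \<rho>Pi] channelO_eq_mat_sum mat_adjoint_mult[of _ N N _ N]
      Proj_adjoint assoc_mult_N cong: mat_sum_cong)

lemma channelO_sandwich_frame_combination:
  assumes KPi: "K * Pi_pn = mat_sum N (\<lambda>\<chi>. a \<chi> \<cdot>\<^sub>m frame R \<chi>) (chars n k)"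
    and K: "K \<in> carrier_mat N N" and \<rho>: "\<rho> \<in> carrier_mat N N" and \<rho>Pi: "Pi_pn * \<rho> * Pi_pn = \<rho>"
  shows "channelO n k U R (K * \<rho> * adj K) = (\<Sum>\<chi>\<in>chars n k. cnj (a \<chi>) * a \<chi>) \<cdot>\<^sub>m \<rho>"
proof -
  have "channelO n k U R (K * \<rho> * adj K) = mat_sum N (\<lambda>\<chi>. (cnj (a \<chi>) * a \<chi>) \<cdot>\<^sub>m \<rho>) (chars n k)"
    using frame_carrier frame_isometry \<rho> \<rho>Pi
    by (simp add: channelO_sandwich_eq_mat_sum[OF K \<rho> \<rho>Pi] KPi Proj_mult_frame_combination
        mat_adjoint_smult mult_smult_assoc_mat[of _ N N _ N] mult_smult_distrib[of _ N N _ N]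
        smult_smult_mat assoc_mult_N mult.commute cong: mat_sum_cong)
  then show ?thesis using \<rho> by (simp add: mat_sum_smult_const)
qed

lemma channelO_sandwich_single_charge:
  assumes K: "K \<in> carrier_mat N N" and \<rho>: "\<rho> \<in> carrier_mat N N" and \<rho>Pi: "Pi_pn * \<rho> * Pi_pn = \<rho>"
    and \<chi>: "\<chi> \<in> chars n k"
    and single: "\<And>\<psi>. \<psi> \<in> chars n k \<Longrightarrow> Proj \<psi> * (K * Pi_pn) = (if \<psi> = \<chi> then K * Pi_pn else 0\<^sub>m N N)"
  defines "M \<equiv> adj (frame R \<chi>) * (K * Pi_pn)"
  shows "channelO n k U R (K * \<rho> * adj K) = M * \<rho> * adj M"
proof -
  have "channelO n k U R (K * \<rho> * adj K) =
      adj (frame R \<chi>) * (K * Pi_pn) * \<rho> * adj (K * Pi_pn) * frame R \<chi>"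
    unfolding channelO_sandwich_eq_mat_sum[OF K \<rho> \<rho>Pi]
    using finite_chars \<chi> frame_carrier K \<rho>
    by (subst mat_sum_single[of _ \<chi>]) (auto simp: single carrier_matD[OF frame_carrier])
  then show ?thesis
    unfolding M_def using frame_carrier[OF \<chi>] K \<rho>
    by (simp add: mat_adjoint_mult[of _ N N _ N] assoc_mult_N)
qed

lemma span_sandwich_scales:
  assumes Es: "Es \<subseteq> pauli_group n" and aligned: "frame_aligned R Es" and K: "K \<in> mspan N Es"
    and \<rho>: "\<rho> \<in> carrier_mat N N" and \<rho>Pi: "Pi_pn * \<rho> * Pi_pn = \<rho>"
  shows "\<exists>w. channelO n k U R (K * \<rho> * adj K) = w \<cdot>\<^sub>m \<rho> \<and> Pi_pn * (adj K * K) * Pi_pn = w \<cdot>\<^sub>m Pi_pn"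
proof -
  have Kc: "K \<in> carrier_mat N N" by (rule span_frame_combination(1)[OF Es aligned K])
  obtain a where KPi: "K * Pi_pn = mat_sum N (\<lambda>\<chi>. a \<chi> \<cdot>\<^sub>m frame R \<chi>) (chars n k)"
    using span_frame_combination(2)[OF Es aligned K] unfolding frame_combination_def by blast
  have "Pi_pn * (adj K * K) * Pi_pn = Pi_pn * adj K * (K * Pi_pn)" using Kc by (simp add: assoc_mult_N)
  also have "\<dots> = adj (K * Pi_pn) * (K * Pi_pn)" using Pi_pn_mult_adjoint[OF Kc] by simp
  also have "\<dots> = (\<Sum>\<chi>\<in>chars n k. cnj (a \<chi>) * a \<chi>) \<cdot>\<^sub>m Pi_pn"
    unfolding KPi by (rule frame_combination_gram)
  finally show ?thesis using channelO_sandwich_frame_combination[OF KPi Kc \<rho> \<rho>Pi] by blast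
qed

lemma channelO_kraus_sum:
  assumes \<rho>: "\<rho> \<in> carrier_mat N N"
    and Ks: "\<And>K. K \<in> set Ks \<Longrightarrow> K \<in> carrier_mat N N \<and> channelO n k U R (K * \<rho> * adj K) = w K \<cdot>\<^sub>m \<rho>
      \<and> Pi_pn * (adj K * K) * Pi_pn = w K \<cdot>\<^sub>m Pi_pn"
  shows "channelO n k U R (msum N (map (\<lambda>K. K * \<rho> * adj K) Ks)) = (\<Sum>K\<leftarrow>Ks. w K) \<cdot>\<^sub>m \<rho>
    \<and> Pi_pn * msum N (map (\<lambda>K. adj K * K) Ks) * Pi_pn = (\<Sum>K\<leftarrow>Ks. w K) \<cdot>\<^sub>m Pi_pn"
  using Ks
proof (induction Ks)
  case Nil
  then show ?case using \<rho> by (simp add: msum_def channelO_zero)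
next
  case (Cons K Ks)
  have Kc: "K \<in> carrier_mat N N" using Cons.prems by simp
  have sand: "msum N (map (\<lambda>K. K * \<rho> * adj K) Ks) \<in> carrier_mat N N"
    and gram: "msum N (map (\<lambda>K. adj K * K) Ks) \<in> carrier_mat N N"
    using Cons.prems \<rho> by (auto intro!: msum_carrier)
  show ?case
    using Cons Kc \<rho> sand gram
    by (simp add: msum_def channelO_add add_smult_distrib_right_mat[OF \<rho>]
        add_smult_distrib_right_mat[OF Pi_pn_carrier] mult_add_distrib_mat[of _ N N _ N] add_mult_distrib_mat[of _ N N _ _ N])
qed

theorem corrects_if_frame_aligned:
  assumes Es: "Es \<subseteq> pauli_group n" and aligned: "frame_aligned R Es"
  shows "corrects n k U (channelO n k U R) Es"
  unfolding corrects_def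
proof (intro allI impI)
  fix \<rho> Ks
  assume \<rho>: "density_pn n k U \<rho>" and Ks: "set Ks \<subseteq> mspan N Es"
    and normalised: "Pi_pn * msum N (map (\<lambda>K. adj K * K) Ks) * Pi_pn = Pi_pn"
  have \<rho>c: "\<rho> \<in> carrier_mat N N" and \<rho>Pi: "Pi_pn * \<rho> * Pi_pn = \<rho>"
    using \<rho> unfolding density_pn_def psd_def by auto
  have "\<forall>K\<in>set Ks. \<exists>w. K \<in> carrier_mat N N \<and> channelO n k U R (K * \<rho> * adj K) = w \<cdot>\<^sub>m \<rho>
      \<and> Pi_pn * (adj K * K) * Pi_pn = w \<cdot>\<^sub>m Pi_pn"
  proof
    fix K assume "K \<in> set Ks"
    then have K: "K \<in> mspan N Es" using Ks by blast
    show "\<exists>w. K \<in> carrier_mat N N \<and> channelO n k U R (K * \<rho> * adj K) = w \<cdot>\<^sub>m \<rho>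
        \<and> Pi_pn * (adj K * K) * Pi_pn = w \<cdot>\<^sub>m Pi_pn"
      using span_sandwich_scales[OF Es aligned K \<rho>c \<rho>Pi] span_frame_combination(1)[OF Es aligned K]
      by blast
  qed
  from bchoice[OF this] obtain w where w: "\<forall>K\<in>set Ks. K \<in> carrier_mat N N \<and>
      channelO n k U R (K * \<rho> * adj K) = w K \<cdot>\<^sub>m \<rho> \<and> Pi_pn * (adj K * K) * Pi_pn = w K \<cdot>\<^sub>m Pi_pn"
    by blast
  note sums = channelO_kraus_sum[OF \<rho>c bspec[OF w]]
  have "(\<Sum>K\<leftarrow>Ks. w K) \<cdot>\<^sub>m Pi_pn = 1 \<cdot>\<^sub>m Pi_pn" using sums normalised by simp
  then have "(\<Sum>K\<leftarrow>Ks. w K) = 1" by (rule smult_mat_cancel[OF Pi_pn_carrier Pi_pn_nonzero])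
  then show "channelO n k U R (msum N (map (\<lambda>K. K * \<rho> * adj K) Ks)) = \<rho>" using sums by simp
qed

end

end

section \<open>Maximal correctable sets contain every charge\<close>

lemma rank_sum_of_products_le:
  fixes f g :: "'x \<Rightarrow> nat \<Rightarrow> complex"
  assumes "finite S"
  shows "vec_space.rank m (mat m m (\<lambda>(i,j). \<Sum>\<chi>\<in>S. f \<chi> i * g \<chi> j)) \<le> card S"
  using assms
proof (induction S rule: finite_induct)
  case empty
  have zero: "mat m m (\<lambda>(i,j). \<Sum>\<chi>\<in>{}. f \<chi> i * g \<chi> j) = (0\<^sub>m m m :: complex mat)"
    by (rule eq_matI) simp_all
  show ?case unfolding zero using vec_space.rank_0I[of m m] by simp
next
  case (insert x F)
  have "mat m m (\<lambda>(i,j). \<Sum>\<chi>\<in>insert x F. f \<chi> i * g \<chi> j) =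
     mat m m (\<lambda>(i,j). f x i * g x j) + mat m m (\<lambda>(i,j). \<Sum>\<chi>\<in>F. f \<chi> i * g \<chi> j)"
    by (rule eq_matI) (simp_all add: insert)
  moreover have "vec_space.rank m (mat m m (\<lambda>(i,j). f x i * g x j)
      + mat m m (\<lambda>(i,j). \<Sum>\<chi>\<in>F. f \<chi> i * g \<chi> j))
     \<le> vec_space.rank m (mat m m (\<lambda>(i,j). f x i * g x j))
       + vec_space.rank m (mat m m (\<lambda>(i,j). \<Sum>\<chi>\<in>F. f \<chi> i * g \<chi> j))"
    by (rule vec_space.rank_subadditive[of _ m m]) simp_all
  moreover have "vec_space.rank m (mat m m (\<lambda>(i,j). f x i * g x j)) \<le> 1"
    by (rule vec_space.rank_le_1_product_entries[of _ m m "f x" "g x"]) simp_all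
  ultimately show ?case using insert by simp
qed

context pauli_gauge
begin

text \<open>Within one charge sector all errors agree on \<open>\<H>\<^sub>p\<^sub>n\<close> up to a scalar \<open>\<alpha>\<close>, so the
  coefficient matrix of a correctable set is block diagonal with rank-one blocks.\<close>

lemma correctable_coefficients:
  assumes Es: "Es \<subseteq> pauli_group n" and C: "correctable_with n k U Es C"
  obtains \<alpha> where
    "\<And>E F. E \<in> Es \<Longrightarrow> F \<in> Es \<Longrightarrow> C E F = (if charge E = charge F then cnj (\<alpha> E) * \<alpha> F else 0)"
proof -
  have CE: "Pi_pn * adj E * F * Pi_pn = C E F \<cdot>\<^sub>m Pi_pn" if "E \<in> Es" "F \<in> Es" for E F
    using C that unfolding correctable_with_def by blast
  have carrier: "E \<in> Es \<Longrightarrow> E \<in> carrier_mat N N" for E using Es pauli_group_carrier by blast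
  define r where "r \<chi> = (SOME E. E \<in> Es \<and> charge E = \<chi>)" for \<chi>
  have r: "r (charge F) \<in> Es" "charge (r (charge F)) = charge F" if "F \<in> Es" for F
    using someI[of "\<lambda>E. E \<in> Es \<and> charge E = charge F" F] that unfolding r_def by auto
  define \<alpha> where "\<alpha> F = C (r (charge F)) F" for F
  have \<alpha>: "F * Pi_pn = \<alpha> F \<cdot>\<^sub>m (r (charge F) * Pi_pn)" if F: "F \<in> Es" for F
    unfolding \<alpha>_def using r[OF F] F Es CE[OF r(1)[OF F] F] by (intro same_charge_mult_Pi_pn) auto
  show ?thesis
  proof
    fix E F assume E: "E \<in> Es" and F: "F \<in> Es"
    show "C E F = (if charge E = charge F then cnj (\<alpha> E) * \<alpha> F else 0)"
    proof (cases "charge E = charge F")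
      case False
      have "C E F \<cdot>\<^sub>m Pi_pn = 0 \<cdot>\<^sub>m Pi_pn"
        using CE[OF E F] Pi_pn_adj_mult_Pi_pn_charge_ne[OF _ _ False] E F Es by auto
      then show ?thesis using False smult_mat_cancel[OF Pi_pn_carrier Pi_pn_nonzero] by simp
    next
      case True
      let ?R = "r (charge E) * Pi_pn"
      have R: "r (charge E) \<in> pauli_group n" using r(1)[OF E] Es by blast
      have "C E F \<cdot>\<^sub>m Pi_pn = adj (E * Pi_pn) * (F * Pi_pn)"
        using CE[OF E F] Pi_pn_adj_mult_Pi_pn[OF carrier[OF E] carrier[OF F]] by simp
      also have "\<dots> = (cnj (\<alpha> E) * \<alpha> F) \<cdot>\<^sub>m (adj ?R * ?R)"
        unfolding \<alpha>[OF E] \<alpha>[OF F] True[symmetric] using pauli_group_carrier[OF R]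
        by (simp add: mat_adjoint_smult smult_mult_smult_mat[of _ N N _ N])
      also have "adj ?R * ?R = Pi_pn" by (rule pauli_mult_Pi_pn_isometry[OF R])
      finally show ?thesis using True smult_mat_cancel[OF Pi_pn_carrier Pi_pn_nonzero] by simp
    qed
  qed
qed

lemma maximal_correctable_all_charges:
  assumes Es: "Es \<subseteq> pauli_group n" and max: "maximal_correctable n k U Es"
  shows "charge ` Es = chars n k"
proof -
  obtain C e where fin: "finite Es" and C: "correctable_with n k U Es C"
    and e: "bij_betw e {..<card Es} Es"
    and rank: "vec_space.rank (card Es) (mat (card Es) (card Es) (\<lambda>(i,j). C (e i) (e j))) = 2^(n-k)"
    using max unfolding maximal_correctable_def by blast
  obtain \<alpha> where \<alpha>: "\<And>E F. E \<in> Es \<Longrightarrow> F \<in> Es \<Longrightarrow>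
      C E F = (if charge E = charge F then cnj (\<alpha> E) * \<alpha> F else 0)"
    using correctable_coefficients[OF Es C] by blast
  have sub: "charge ` Es \<subseteq> chars n k" using Es charge_in_chars by blast
  define m where "m = card Es"
  have e_in: "i < m \<Longrightarrow> e i \<in> Es" for i using e unfolding m_def by (simp add: bij_betw_apply)
  define f where "f \<chi> i = (if charge (e i) = \<chi> then cnj (\<alpha> (e i)) else 0)" for \<chi> i
  define g where "g \<chi> j = (if charge (e j) = \<chi> then \<alpha> (e j) else 0)" for \<chi> j
  have "mat m m (\<lambda>(i,j). C (e i) (e j)) = mat m m (\<lambda>(i,j). \<Sum>\<chi>\<in>charge ` Es. f \<chi> i * g \<chi> j)"
  proof (rule eq_matI)
    fix i j assume "i < dim_row (mat m m (\<lambda>(i,j). \<Sum>\<chi>\<in>charge ` Es. f \<chi> i * g \<chi> j))"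
      "j < dim_col (mat m m (\<lambda>(i,j). \<Sum>\<chi>\<in>charge ` Es. f \<chi> i * g \<chi> j))"
    then have i: "i < m" and j: "j < m" by simp_all
    have "(\<Sum>\<chi>\<in>charge ` Es. f \<chi> i * g \<chi> j) =
        (\<Sum>\<chi>\<in>charge ` Es. if \<chi> = charge (e i) then f \<chi> i * g \<chi> j else 0)"
      by (rule sum.cong) (auto simp: f_def)
    also have "\<dots> = C (e i) (e j)"
      using fin e_in[OF i] e_in[OF j] by (simp add: \<alpha> f_def g_def)
    finally show "mat m m (\<lambda>(i,j). C (e i) (e j)) $$ (i,j) =
        mat m m (\<lambda>(i,j). \<Sum>\<chi>\<in>charge ` Es. f \<chi> i * g \<chi> j) $$ (i,j)"
      using i j by simp
  qed simp_all
  then have "2^(n-k) \<le> card (charge ` Es)"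
    using rank rank_sum_of_products_le[of "charge ` Es" m f g] fin unfolding m_def by simp
  then have "card (charge ` Es) = card (chars n k)"
    using card_mono[OF finite_chars sub] card_chars_le[of n k] by simp
  then show ?thesis using card_subset_eq[OF finite_chars sub] by simp
qed

definition representative :: "complex mat set \<Rightarrow> (nat \<Rightarrow> complex) \<Rightarrow> complex mat" where
  "representative Es \<chi> = (SOME E. E \<in> Es \<and> charge E = \<chi>)"

lemma representative_in:
  assumes Es: "Es \<subseteq> pauli_group n" and max: "maximal_correctable n k U Es" and \<chi>: "\<chi> \<in> chars n k"
  shows "representative Es \<chi> \<in> Es" and "charge (representative Es \<chi>) = \<chi>"
proof -
  have "\<chi> \<in> charge ` Es" using maximal_correctable_all_charges[OF Es max] \<chi> by simp
  then have "\<exists>E. E \<in> Es \<and> charge E = \<chi>" by auto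
  then have "representative Es \<chi> \<in> Es \<and> charge (representative Es \<chi>) = \<chi>"
    unfolding representative_def by (rule someI_ex)
  then show "representative Es \<chi> \<in> Es" "charge (representative Es \<chi>) = \<chi>" by simp_all
qed

lemma correctable_same_charge_mult_Pi_pn:
  assumes Es: "Es \<subseteq> pauli_group n" and C: "correctable_with n k U Es C"
    and E: "E \<in> Es" and F: "F \<in> Es" and same: "charge E = charge F"
  shows "\<exists>c. cmod c = 1 \<and> F * Pi_pn = c \<cdot>\<^sub>m (E * Pi_pn)"
proof -
  have p: "E \<in> pauli_group n" "F \<in> pauli_group n" using E F Es by auto
  have "Pi_pn * adj E * F * Pi_pn = C E F \<cdot>\<^sub>m Pi_pn" using C E F unfolding correctable_with_def by blast
  then show ?thesis using same_charge_mult_Pi_pn[OF p same] by blast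
qed

lemma representative_frames_complete:
  assumes Es: "Es \<subseteq> pauli_group n" and max: "maximal_correctable n k U Es"
  shows "complete_frames n k U (\<lambda>\<chi>. representative Es \<chi> * Pi_pn)"
  unfolding complete_frames_def frame_field_def
proof (intro ballI conjI)
  fix \<chi> assume "\<chi> \<in> chars n k - {triv_char}"
  then have r: "representative Es \<chi> \<in> pauli_group n" "charge (representative Es \<chi>) = \<chi>"
    using representative_in[OF Es max] Es by auto
  show "representative Es \<chi> * Pi_pn \<in> carrier_mat N N" using pauli_group_carrier[OF r(1)] by simp
  show "adj (representative Es \<chi> * Pi_pn) * (representative Es \<chi> * Pi_pn) = Pi_pn"
    by (rule pauli_mult_Pi_pn_isometry[OF r(1)])
  show "Proj \<chi> * (representative Es \<chi> * Pi_pn) = representative Es \<chi> * Pi_pn"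
    using Proj_charge_mult_pauli_mult_Pi_pn[OF r(1)] r(2) by simp
qed

lemma representative_frames_aligned:
  assumes Es: "Es \<subseteq> pauli_group n" and one: "1\<^sub>m N \<in> Es" and max: "maximal_correctable n k U Es"
  shows "frame_aligned (\<lambda>\<chi>. representative Es \<chi> * Pi_pn) Es"
  unfolding frame_aligned_def
proof (intro ballI conjI impI)
  obtain C where C: "correctable_with n k U Es C" using max unfolding maximal_correctable_def by blast
  fix E assume E: "E \<in> Es"
  have Ec: "E \<in> carrier_mat N N" using E Es pauli_group_carrier by blast
  show "\<exists>\<eta>. cmod \<eta> = 1 \<and> E * Pi_pn = \<eta> \<cdot>\<^sub>m Pi_pn" if "E \<in> Cset n k U triv_char"
  proof -
    have "charge (1\<^sub>m N) = triv_char" using one Es by (intro charge_one) auto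
    moreover have "charge E = triv_char" by (rule charge_eqI[OF that triv_char_in_chars])
    ultimately show ?thesis using correctable_same_charge_mult_Pi_pn[OF Es C one E] by simp
  qed
  fix \<chi> assume \<chi>: "\<chi> \<in> chars n k - {triv_char}" and E\<chi>: "E \<in> Cset n k U \<chi>"
  let ?r = "representative Es \<chi>"
  have \<chi>': "\<chi> \<in> chars n k" using \<chi> by simp
  have r: "?r \<in> Es" "?r \<in> pauli_group n" using representative_in(1)[OF Es max \<chi>'] Es by auto
  have "charge ?r = charge E"
    using representative_in(2)[OF Es max \<chi>'] charge_eqI[OF E\<chi> \<chi>'] by simp
  then obtain c where c: "cmod c = 1" "E * Pi_pn = c \<cdot>\<^sub>m (?r * Pi_pn)"
    using correctable_same_charge_mult_Pi_pn[OF Es C r(1) E] by blast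
  have "adj (?r * Pi_pn) * E * Pi_pn = adj (?r * Pi_pn) * (E * Pi_pn)"
    using pauli_group_carrier[OF r(2)] Ec by (simp add: assoc_mult_N)
  also have "\<dots> = c \<cdot>\<^sub>m Pi_pn" unfolding c(2)
    using pauli_group_carrier[OF r(2)] pauli_mult_Pi_pn_isometry[OF r(2)]
    by (simp add: mult_smult_distrib[of _ N N _ N])
  finally show "\<exists>\<eta>. cmod \<eta> = 1 \<and> adj (?r * Pi_pn) * E * Pi_pn = \<eta> \<cdot>\<^sub>m Pi_pn"
    using c(1) by blast
qed

end

section \<open>Uniqueness of the frame fields\<close>

lemma mat_one_by_one: "X \<in> carrier_mat 1 1 \<Longrightarrow> X = (X $$ (0,0)) \<cdot>\<^sub>m (1\<^sub>m 1 :: complex mat)"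
  by (rule eq_matI) auto

lemma col_eqI:
  "A \<in> carrier_mat d 1 \<Longrightarrow> B \<in> carrier_mat d 1 \<Longrightarrow> (\<And>a. a < d \<Longrightarrow> A $$ (a,0) = B $$ (a,0)) \<Longrightarrow> A = B"
  by (rule eq_matI) auto

lemma col_gram:
  assumes u: "u \<in> carrier_mat d 1"
  shows "adj u * u = complex_of_real (\<Sum>b<d. (cmod (u $$ (b,0)))\<^sup>2) \<cdot>\<^sub>m 1\<^sub>m 1"
proof (rule eq_matI)
  fix i j assume "i < dim_row (complex_of_real (\<Sum>b<d. (cmod (u $$ (b,0)))\<^sup>2) \<cdot>\<^sub>m (1\<^sub>m 1 :: complex mat))"
    "j < dim_col (complex_of_real (\<Sum>b<d. (cmod (u $$ (b,0)))\<^sup>2) \<cdot>\<^sub>m (1\<^sub>m 1 :: complex mat))"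
  then have ij: "i = 0" "j = 0" by simp_all
  have "(adj u * u) $$ (0,0) = (\<Sum>b<d. cnj (u $$ (b,0)) * u $$ (b,0))"
    by (rule index_mat_adjoint_mult[OF u u]) simp_all
  also have "\<dots> = complex_of_real (\<Sum>b<d. (cmod (u $$ (b,0)))\<^sup>2)"
    unfolding cnj_mult_self of_real_sum ..
  finally show "(adj u * u) $$ (i,j) = (complex_of_real (\<Sum>b<d. (cmod (u $$ (b,0)))\<^sup>2) \<cdot>\<^sub>m 1\<^sub>m 1) $$ (i,j)"
    using ij by simp
qed (use u in simp_all)

lemma normalize_col:
  assumes u: "u \<in> carrier_mat d 1" and nz: "u \<noteq> 0\<^sub>m d 1"
  shows "\<exists>c. c \<noteq> 0 \<and> adj (c \<cdot>\<^sub>m u) * (c \<cdot>\<^sub>m u) = 1\<^sub>m 1"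
proof -
  define t where "t = (\<Sum>b<d. (cmod (u $$ (b,0)))\<^sup>2)"
  obtain i where i: "i < d" "u $$ (i,0) \<noteq> 0"
    using u nz by (metis (no_types, lifting) col_eqI index_zero_mat(1) less_one zero_carrier_mat)
  have "0 < (cmod (u $$ (i,0)))\<^sup>2" using i by simp
  also have "\<dots> \<le> t" unfolding t_def by (rule member_le_sum) (use i in simp_all)
  finally have t: "t > 0" .
  define c where "c = complex_of_real (1 / sqrt t)"
  have "cnj c * c * complex_of_real t = 1"
    unfolding c_def using t by (simp flip: of_real_mult)
  moreover have "adj (c \<cdot>\<^sub>m u) * (c \<cdot>\<^sub>m u) = (cnj c * c) \<cdot>\<^sub>m (adj u * u)"
    using u by (simp add: mat_adjoint_smult smult_mult_smult_mat[of _ 1 d _ 1])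
  ultimately have "adj (c \<cdot>\<^sub>m u) * (c \<cdot>\<^sub>m u) = 1\<^sub>m 1"
    unfolding col_gram[OF u] t_def[symmetric] smult_smult_mat by simp
  moreover have "c \<noteq> 0" unfolding c_def using t by simp
  ultimately show ?thesis by blast
qed

text \<open>If \<open>|MV\<rangle>\<langle>MV| = |V\<rangle>\<langle>V|\<close> for a unit vector \<open>V\<close>, then \<open>MV = c\<^sup>-\<^sup>1 V\<close> with
  \<open>c = \<langle>MV|V\<rangle>\<close>: apply both sides to \<open>V\<close>.\<close>

lemma eigenvector_if_sandwich_eq:
  assumes M: "M \<in> carrier_mat d d" and V: "V \<in> carrier_mat d 1" and unit: "adj V * V = 1\<^sub>m 1"
    and eq: "M * V * adj (M * V) = V * adj V"
  shows "\<exists>l. M * V = l \<cdot>\<^sub>m V"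
proof -
  define W where "W = M * V"
  have W: "W \<in> carrier_mat d 1" unfolding W_def using M V by simp
  define c where "c = (adj W * V) $$ (0,0)"
  have WV: "adj W * V = c \<cdot>\<^sub>m 1\<^sub>m 1"
    unfolding c_def by (rule mat_one_by_one, rule mult_carrier_mat[OF mat_adjoint_carrier[OF W] V])
  have "V = V * (adj V * V)" using unit V by simp
  also have "\<dots> = W * adj W * V" using eq V unfolding W_def by (simp add: assoc_mult_mat[of _ d 1 _ d _ 1])
  also have "\<dots> = W * (adj W * V)" using W V by (simp add: assoc_mult_mat[of _ d 1 _ d _ 1])
  also have "\<dots> = c \<cdot>\<^sub>m W" unfolding WV using W by (simp add: mult_smult_distrib[of _ d 1 _ 1])
  finally have V_eq: "V = c \<cdot>\<^sub>m W" .
  have "c \<noteq> 0"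
  proof
    assume "c = 0"
    then have "adj V * V = 0\<^sub>m 1 1" using V_eq W by simp
    then show False using unit one_mat_neq_zero[of 1] by simp
  qed
  then have "W = (1 / c) \<cdot>\<^sub>m V" using V_eq by (simp add: smult_smult_mat)
  then show ?thesis unfolding W_def by blast
qed

text \<open>Either \<open>v\<close> and \<open>w\<close> are independent and the eigenvalues of \<open>v\<close>, \<open>w\<close> and \<open>v + w\<close>
  coincide, or \<open>v\<close> is a multiple of \<open>w\<close>.\<close>

lemma eigenvalues_agree:
  fixes M v w :: "complex mat"
  assumes v: "v \<in> carrier_mat d 1" and w: "w \<in> carrier_mat d 1" and M: "M \<in> carrier_mat d d"
    and v0: "v \<noteq> 0\<^sub>m d 1"
    and Mv: "M * v = \<theta> \<cdot>\<^sub>m v" and Mw: "M * w = \<mu> \<cdot>\<^sub>m w" and Mvw: "M * (v + w) = \<nu> \<cdot>\<^sub>m (v + w)"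
  shows "M * w = \<theta> \<cdot>\<^sub>m w"
proof -
  have "\<theta> \<cdot>\<^sub>m v + \<mu> \<cdot>\<^sub>m w = \<nu> \<cdot>\<^sub>m (v + w)"
    using Mv Mw Mvw M v w by (simp add: mult_add_distrib_mat[of _ d d _ 1])
  then have ent: "\<theta> * v $$ (a,0) + \<mu> * w $$ (a,0) = \<nu> * v $$ (a,0) + \<nu> * w $$ (a,0)" if "a < d" for a
    using that v w by (auto dest!: arg_cong[of _ _ "\<lambda>X. X $$ (a,0)"] simp: distrib_left)
  show ?thesis
  proof (cases "\<nu> = \<theta>")
    case True
    have "\<mu> \<cdot>\<^sub>m w = \<theta> \<cdot>\<^sub>m w"
    proof (rule col_eqI[of _ d])
      fix a assume a: "a < d"
      have "\<mu> * w $$ (a,0) = \<theta> * w $$ (a,0)"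
        using ent[OF a] True by simp
      then show "(\<mu> \<cdot>\<^sub>m w) $$ (a,0) = (\<theta> \<cdot>\<^sub>m w) $$ (a,0)" using a w by simp
    qed (use w in simp_all)
    then show ?thesis using Mw by simp
  next
    case False
    define \<kappa> where "\<kappa> = (\<nu> - \<mu>) / (\<theta> - \<nu>)"
    have v_eq: "v = \<kappa> \<cdot>\<^sub>m w"
    proof (rule col_eqI[OF v])
      fix a assume a: "a < d"
      have "(\<theta> - \<nu>) * v $$ (a,0) = (\<nu> - \<mu>) * w $$ (a,0)" using ent[OF a] by (simp add: algebra_simps)
      then show "v $$ (a,0) = (\<kappa> \<cdot>\<^sub>m w) $$ (a,0)" unfolding \<kappa>_def using False a w by (simp add: field_simps)
    qed (use w in simp)
    have \<kappa>: "\<kappa> \<noteq> 0" and w0: "w \<noteq> 0\<^sub>m d 1" using v0 v_eq w by auto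
    have "(\<kappa> * \<mu>) \<cdot>\<^sub>m w = (\<kappa> * \<theta>) \<cdot>\<^sub>m w"
      using Mv Mw M w unfolding v_eq by (simp add: mult_smult_distrib[of _ d d _ 1] smult_smult_mat mult.commute)
    then have "\<kappa> * \<mu> = \<kappa> * \<theta>" by (rule smult_mat_cancel[OF w w0])
    then have "\<mu> = \<theta>" using \<kappa> by simp
    then show ?thesis using Mw by simp
  qed
qed

definition unit_col :: "nat \<Rightarrow> nat \<Rightarrow> complex mat" where
  "unit_col d j = mat d 1 (\<lambda>(a,_). if a = j then 1 else 0)"

lemma unit_col_carrier [simp]: "unit_col d j \<in> carrier_mat d 1"
  unfolding unit_col_def by simp

lemma index_mult_unit_col:
  assumes X: "X \<in> carrier_mat m d" and j: "j < d" and a: "a < m"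
  shows "(X * unit_col d j) $$ (a,0) = X $$ (a,j)"
  using X j a by (simp add: unit_col_def scalar_prod_def atLeast0LessThan if_distrib cong: if_cong)

lemma psd_outer_product:
  assumes V: "V \<in> carrier_mat d 1"
  shows "psd d (V * adj V)"
  unfolding psd_def
proof (intro conjI ballI)
  show "V * adj V \<in> carrier_mat d d" using V by simp
  fix v :: "complex vec" assume v: "v \<in> carrier_vec d"
  define s where "s = (\<Sum>j<d. cnj (V $$ (j,0)) * v $ j)"
  have "(V * adj V) *\<^sub>v v = vec d (\<lambda>i. V $$ (i,0) * s)"
    using V v by (intro eq_vecI)
      (simp_all add: s_def scalar_prod_def atLeast0LessThan sum_distrib_left mult.assoc)
  then have "conjugate v \<bullet> ((V * adj V) *\<^sub>v v) = (\<Sum>i<d. cnj (v $ i) * (V $$ (i,0) * s))"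
    using v by (simp add: scalar_prod_def atLeast0LessThan)
  also have "\<dots> = s * cnj s"
    unfolding s_def by (simp add: sum_distrib_left sum_distrib_right ac_simps)
  also have "\<dots> = complex_of_real ((cmod s)\<^sup>2)" by (rule complex_norm_square[symmetric])
  finally show "Im (conjugate v \<bullet> ((V * adj V) *\<^sub>v v)) = 0"
    and "Re (conjugate v \<bullet> ((V * adj V) *\<^sub>v v)) \<ge> 0" by simp_all
qed

lemma mtrace_outer_product:
  assumes V: "V \<in> carrier_mat d 1"
  shows "mtrace (V * adj V) = (adj V * V) $$ (0,0)"
  using V unfolding mtrace_def by (simp add: scalar_prod_def atLeast0LessThan mult.commute)

context pauli_gauge
begin

lemma density_pn_pure_state:
  assumes V: "V \<in> carrier_mat N 1" and PiV: "Pi_pn * V = V" and unit: "adj V * V = 1\<^sub>m 1"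
  shows "density_pn n k U (V * adj V)"
proof -
  have "adj V * Pi_pn = adj V"
    using arg_cong[OF PiV, of adj] mat_adjoint_mult[OF Pi_pn_carrier V] Pi_pn_adjoint by simp
  moreover have "Pi_pn * (V * adj V) * Pi_pn = (Pi_pn * V) * (adj V * Pi_pn)"
  proof -
    have "Pi_pn * (V * adj V) = Pi_pn * V * adj V"
      by (rule assoc_mult_mat[symmetric, of _ N N _ 1 _ N]) (use V in simp_all)
    moreover have "Pi_pn * V * adj V * Pi_pn = (Pi_pn * V) * (adj V * Pi_pn)"
      by (rule assoc_mult_mat[of _ N 1 _ N _ N]) (use V mult_carrier_mat[OF Pi_pn_carrier V] in simp_all)
    ultimately show ?thesis by simp
  qed
  ultimately show ?thesis
    unfolding density_pn_def using psd_outer_product[OF V] mtrace_outer_product[OF V] unit PiV by simp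
qed

lemma exists_unit_in_H_pn: "\<exists>V. V \<in> carrier_mat N 1 \<and> Pi_pn * V = V \<and> adj V * V = 1\<^sub>m 1"
proof -
  obtain i j where ij: "i < N" "j < N" "Pi_pn $$ (i,j) \<noteq> 0"
    using Pi_pn_nonzero Pi_pn_carrier by (metis eq_matI carrier_matD index_zero_mat)
  define u where "u = Pi_pn * unit_col N j"
  have u: "u \<in> carrier_mat N 1" unfolding u_def by (rule mult_carrier_mat[OF Pi_pn_carrier unit_col_carrier])
  have "u $$ (i,0) \<noteq> 0" unfolding u_def using index_mult_unit_col[OF Pi_pn_carrier ij(2,1)] ij(3) by simp
  then have "u \<noteq> 0\<^sub>m N 1" using ij by auto
  then obtain c where c: "adj (c \<cdot>\<^sub>m u) * (c \<cdot>\<^sub>m u) = 1\<^sub>m 1" using normalize_col[OF u] by blast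
  have "Pi_pn * u = u"
    unfolding u_def using Pi_pn_idem assoc_mult_mat[OF Pi_pn_carrier Pi_pn_carrier unit_col_carrier] by simp
  then have "Pi_pn * (c \<cdot>\<^sub>m u) = c \<cdot>\<^sub>m u" using u by (simp add: mult_smult_distrib[of _ N N _ 1])
  then show ?thesis using c u by (intro exI[of _ "c \<cdot>\<^sub>m u"]) simp
qed

definition fixes_pure_states :: "complex mat \<Rightarrow> bool" where
  "fixes_pure_states M \<longleftrightarrow> (\<forall>V. V \<in> carrier_mat N 1 \<longrightarrow> Pi_pn * V = V \<longrightarrow> adj V * V = 1\<^sub>m 1 \<longrightarrow>
     M * V * adj (M * V) = V * adj V)"

lemma eigenvector_in_H_pn:
  assumes M: "M \<in> carrier_mat N N" and pure: "fixes_pure_states M"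
    and u: "u \<in> carrier_mat N 1" and Piu: "Pi_pn * u = u"
  shows "\<exists>l. M * u = l \<cdot>\<^sub>m u"
proof (cases "u = 0\<^sub>m N 1")
  case True
  then show ?thesis using M by (intro exI[of _ 0]) simp
next
  case False
  obtain c where c0: "c \<noteq> 0" and c: "adj (c \<cdot>\<^sub>m u) * (c \<cdot>\<^sub>m u) = 1\<^sub>m 1"
    using normalize_col[OF u False] by blast
  have "Pi_pn * (c \<cdot>\<^sub>m u) = c \<cdot>\<^sub>m u" using Piu u by (simp add: mult_smult_distrib[of _ N N _ 1])
  then obtain l where "M * (c \<cdot>\<^sub>m u) = l \<cdot>\<^sub>m (c \<cdot>\<^sub>m u)"
    using eigenvector_if_sandwich_eq[OF M _ c] pure u c unfolding fixes_pure_states_def by fastforce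
  then have "c \<cdot>\<^sub>m (M * u) = c \<cdot>\<^sub>m (l \<cdot>\<^sub>m u)"
    using M u by (simp add: mult_smult_distrib[of _ N N _ 1] smult_smult_mat mult.commute)
  then have "(1 / c) \<cdot>\<^sub>m (c \<cdot>\<^sub>m (M * u)) = (1 / c) \<cdot>\<^sub>m (c \<cdot>\<^sub>m (l \<cdot>\<^sub>m u))" by simp
  then show ?thesis using c0 by (auto simp: smult_smult_mat)
qed

lemma eq_smult_Pi_pn_if_eigen:
  assumes M: "M \<in> carrier_mat N N" and MPi: "M * Pi_pn = M"
    and eigen: "\<And>w. w \<in> carrier_mat N 1 \<Longrightarrow> Pi_pn * w = w \<Longrightarrow> M * w = \<theta> \<cdot>\<^sub>m w"
  shows "M = \<theta> \<cdot>\<^sub>m Pi_pn"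
proof (rule eq_matI)
  fix a j assume "a < dim_row (\<theta> \<cdot>\<^sub>m Pi_pn)" "j < dim_col (\<theta> \<cdot>\<^sub>m Pi_pn)"
  then have a: "a < N" and j: "j < N" by simp_all
  define w where "w = Pi_pn * unit_col N j"
  have w: "w \<in> carrier_mat N 1" unfolding w_def by (rule mult_carrier_mat[OF Pi_pn_carrier unit_col_carrier])
  have "Pi_pn * w = w"
    unfolding w_def using Pi_pn_idem assoc_mult_mat[OF Pi_pn_carrier Pi_pn_carrier unit_col_carrier] by simp
  then have "M * w = \<theta> \<cdot>\<^sub>m w" by (rule eigen[OF w])
  moreover have "M * w = M * unit_col N j"
    unfolding w_def using MPi assoc_mult_mat[OF M Pi_pn_carrier unit_col_carrier] by simp
  ultimately have "M $$ (a,j) = \<theta> * w $$ (a,0)"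
    using index_mult_unit_col[OF M j a] a w by simp
  then show "M $$ (a,j) = (\<theta> \<cdot>\<^sub>m Pi_pn) $$ (a,j)"
    unfolding w_def using index_mult_unit_col[OF Pi_pn_carrier j a] a j by simp
qed (use M in simp_all)

text \<open>Every vector of \<open>\<H>\<^sub>p\<^sub>n\<close> is an eigenvector of \<open>M\<close>, so \<open>M\<close> acts on \<open>\<H>\<^sub>p\<^sub>n\<close> as a scalar,
  which must be a phase.\<close>

lemma phase_if_fixes_pure_states:
  assumes M: "M \<in> carrier_mat N N" and MPi: "M * Pi_pn = M" and pure: "fixes_pure_states M"
  shows "\<exists>\<theta>. cmod \<theta> = 1 \<and> M = \<theta> \<cdot>\<^sub>m Pi_pn"
proof -
  obtain V where V: "V \<in> carrier_mat N 1" "Pi_pn * V = V" and unit: "adj V * V = 1\<^sub>m 1"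
    using exists_unit_in_H_pn by blast
  have V0: "V \<noteq> 0\<^sub>m N 1" using unit one_mat_neq_zero[of 1] by auto
  obtain \<theta> where \<theta>: "M * V = \<theta> \<cdot>\<^sub>m V" using eigenvector_in_H_pn[OF M pure V] by blast
  have "M * w = \<theta> \<cdot>\<^sub>m w" if w: "w \<in> carrier_mat N 1" "Pi_pn * w = w" for w
  proof -
    obtain \<mu> where "M * w = \<mu> \<cdot>\<^sub>m w" using eigenvector_in_H_pn[OF M pure w] by blast
    moreover obtain \<nu> where "M * (V + w) = \<nu> \<cdot>\<^sub>m (V + w)"
      using eigenvector_in_H_pn[OF M pure, of "V + w"] V w
      by (auto simp: mult_add_distrib_mat[of _ N N _ 1])
    ultimately show ?thesis using eigenvalues_agree[OF V(1) w(1) M V0 \<theta>] by blast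
  qed
  then have M_eq: "M = \<theta> \<cdot>\<^sub>m Pi_pn" by (rule eq_smult_Pi_pn_if_eigen[OF M MPi])
  have "M * V * adj (M * V) = V * adj V" using pure V unit unfolding fixes_pure_states_def by blast
  then have "(cnj \<theta> * \<theta>) \<cdot>\<^sub>m (V * adj V) = V * adj V"
    unfolding \<theta> using V by (simp add: mat_adjoint_smult smult_mult_smult_mat[of _ N 1 _ N] mult.commute)
  then have "((cnj \<theta> * \<theta>) \<cdot>\<^sub>m (V * adj V)) * V = V * adj V * V" by simp
  then have "(cnj \<theta> * \<theta>) \<cdot>\<^sub>m (V * adj V * V) = 1 \<cdot>\<^sub>m (V * adj V * V)"
    using mult_smult_assoc_mat[of "V * adj V" N N V 1] V by simp
  moreover have "V * adj V * V = V" using V unit by (simp add: assoc_mult_mat[of _ N 1 _ N _ 1])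
  ultimately have "cnj \<theta> * \<theta> = 1" using smult_mat_cancel[OF V(1) V0] by simp
  then show ?thesis using M_eq cnj_mult_self_eq_1_iff by blast
qed

text \<open>The channel acts on states corrupted by \<open>E\<close> through \<open>M = R\<^sub>\<chi>\<^sup>\<dagger> E \<Pi>\<^sub>p\<^sub>n\<close>, \<open>\<chi>\<close> the charge of \<open>E\<close>.\<close>

lemma corrects_imp_fixes_pure_states:
  assumes R': "complete_frames n k U R'" and corr: "corrects n k U (channelO n k U R') Es"
    and E: "E \<in> Es" "E \<in> pauli_group n"
  shows "fixes_pure_states (adj (frame R' (charge E)) * (E * Pi_pn))" (is "fixes_pure_states ?M")
  unfolding fixes_pure_states_def
proof (intro allI impI)
  fix V assume V: "V \<in> carrier_mat N 1" and PiV: "Pi_pn * V = V" and unit: "adj V * V = 1\<^sub>m 1"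
  have Ec: "E \<in> carrier_mat N N" using pauli_group_carrier[OF E(2)] .
  have M: "?M \<in> carrier_mat N N" using frame_carrier[OF R' charge_in_chars[OF E(2)]] Ec by simp
  have \<rho>: "density_pn n k U (V * adj V)" by (rule density_pn_pure_state[OF V PiV unit])
  then have \<rho>c: "V * adj V \<in> carrier_mat N N" and \<rho>Pi: "Pi_pn * (V * adj V) * Pi_pn = V * adj V"
    unfolding density_pn_def psd_def by auto
  have span: "set [E] \<subseteq> mspan N Es"
    unfolding mspan_def using E(1) Ec by (auto intro!: exI[of _ "[(1,E)]"] simp: msum_def)
  have "Pi_pn * msum N (map (\<lambda>K. adj K * K) [E]) * Pi_pn = Pi_pn"
    using pauli_group_unitary(1)[OF E(2)] Ec Pi_pn_idem by (simp add: msum_def)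
  then have "channelO n k U R' (msum N (map (\<lambda>K. K * (V * adj V) * adj K) [E])) = V * adj V"
    using corr[unfolded corrects_def, rule_format, OF \<rho> span] by simp
  then have "V * adj V = channelO n k U R' (E * (V * adj V) * adj E)"
    using Ec \<rho>c by (simp add: msum_def)
  also have "\<dots> = ?M * (V * adj V) * adj ?M"
    using Proj_mult_pauli_mult_Pi_pn[OF E(2)]
    by (intro channelO_sandwich_single_charge[OF R' Ec \<rho>c \<rho>Pi charge_in_chars[OF E(2)]]) simp
  also have "\<dots> = ?M * V * adj V * adj ?M"
    using assoc_mult_mat[OF M V mat_adjoint_carrier[OF V]] by simp
  also have "\<dots> = ?M * V * adj (?M * V)"
    using assoc_mult_mat[OF mult_carrier_mat[OF M V] mat_adjoint_carrier[OF V] mat_adjoint_carrier[OF M]]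
    by (simp add: mat_adjoint_mult[OF M V])
  finally show "?M * V * adj (?M * V) = V * adj V" ..
qed

lemma frame_unique:
  assumes Es: "Es \<subseteq> pauli_group n" and max: "maximal_correctable n k U Es"
    and R': "complete_frames n k U R'" and corr: "corrects n k U (channelO n k U R') Es"
    and \<chi>: "\<chi> \<in> chars n k - {triv_char}"
  shows "\<exists>\<theta>. cmod \<theta> = 1 \<and> R' \<chi> = \<theta> \<cdot>\<^sub>m (representative Es \<chi> * Pi_pn)"
proof -
  have \<chi>': "\<chi> \<in> chars n k" using \<chi> by simp
  define E where "E = representative Es \<chi>"
  have E: "E \<in> Es" "E \<in> pauli_group n" and charge_E: "charge E = \<chi>"
    using representative_in[OF Es max \<chi>'] Es unfolding E_def by auto
  have Ec: "E \<in> carrier_mat N N" using pauli_group_carrier[OF E(2)] .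
  have frame_eq: "frame R' \<chi> = R' \<chi>" unfolding frame_def using \<chi> by simp
  have R'c: "R' \<chi> \<in> carrier_mat N N" using frame_carrier[OF R' \<chi>'] frame_eq by simp
  define M where "M = adj (R' \<chi>) * (E * Pi_pn)"
  have M: "M \<in> carrier_mat N N" unfolding M_def using R'c Ec by simp
  have "M * Pi_pn = M" unfolding M_def using R'c Ec Pi_pn_idem by (simp add: assoc_mult_N)
  moreover have "fixes_pure_states M"
    using corrects_imp_fixes_pure_states[OF R' corr E] unfolding M_def charge_E frame_eq .
  ultimately obtain \<theta> where \<theta>: "cmod \<theta> = 1" "M = \<theta> \<cdot>\<^sub>m Pi_pn"
    using phase_if_fixes_pure_states[OF M] by blast
  have "E * Pi_pn = \<theta> \<cdot>\<^sub>m R' \<chi>"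
  proof (rule eq_smult_if_overlap_phase[OF _ R'c])
    show "adj (R' \<chi>) * R' \<chi> = Pi_pn" using frame_isometry[OF R' \<chi>'] frame_eq by simp
  qed (use Ec pauli_mult_Pi_pn_isometry[OF E(2)] \<theta> in \<open>simp_all add: M_def\<close>)
  then have "R' \<chi> = cnj \<theta> \<cdot>\<^sub>m (E * Pi_pn)"
    using \<theta>(1) cnj_mult_self_eq_1_iff[of \<theta>] by (simp add: smult_smult_mat)
  then show ?thesis using \<theta>(1) unfolding E_def by (intro exI[of _ "cnj \<theta>"]) simp
qed

end

theorem mainTheorem8:
  fixes n k :: nat and U :: "nat \<Rightarrow> complex mat"
  assumes "1 \<le> n" and "k < n" and "pauli_rep n k U"
  shows "(\<forall>R Es. complete_frames n k U R \<longrightarrow> Es \<subseteq> pauli_group n \<longrightarrow> 1\<^sub>m (2^n) \<in> Es \<longrightarrow>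
            (\<forall>E\<in>Es. (E \<in> Cset n k U triv_char \<longrightarrow>
                        (\<exists>\<eta>. cmod \<eta> = 1 \<and> E * Ppn n k U = \<eta> \<cdot>\<^sub>m Ppn n k U)) \<and>
                     (\<forall>\<chi>\<in>chars n k - {triv_char}. E \<in> Cset n k U \<chi> \<longrightarrow>
                        (\<exists>\<eta>. cmod \<eta> = 1 \<and> adj (R \<chi>) * E * Ppn n k U = \<eta> \<cdot>\<^sub>m Ppn n k U))) \<longrightarrow>
            corrects n k U (channelO n k U R) Es)
       \<and> (\<forall>Es. Es \<subseteq> pauli_group n \<longrightarrow> 1\<^sub>m (2^n) \<in> Es \<longrightarrow> maximal_correctable n k U Es \<longrightarrow>
            (\<exists>R. complete_frames n k U R \<and> corrects n k U (channelO n k U R) Es \<and>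
               (\<forall>R'. complete_frames n k U R' \<and> corrects n k U (channelO n k U R') Es \<longrightarrow>
                  (\<forall>\<chi>\<in>chars n k - {triv_char}. \<exists>\<theta>. cmod \<theta> = 1 \<and> R' \<chi> = \<theta> \<cdot>\<^sub>m R \<chi>))))"
proof -
  interpret pauli_gauge n k U using assms(3) by unfold_locales
  show ?thesis
  proof (intro conjI allI impI)
    fix R Es
    assume "complete_frames n k U R" and "Es \<subseteq> pauli_group n"
      and "\<forall>E\<in>Es. (E \<in> Cset n k U triv_char \<longrightarrow> (\<exists>\<eta>. cmod \<eta> = 1 \<and> E * Ppn n k U = \<eta> \<cdot>\<^sub>m Ppn n k U)) \<and>
        (\<forall>\<chi>\<in>chars n k - {triv_char}. E \<in> Cset n k U \<chi> \<longrightarrow>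
          (\<exists>\<eta>. cmod \<eta> = 1 \<and> adj (R \<chi>) * E * Ppn n k U = \<eta> \<cdot>\<^sub>m Ppn n k U))"
    then show "corrects n k U (channelO n k U R) Es"
      by (intro corrects_if_frame_aligned) (simp_all add: frame_aligned_def)
  next
    fix Es assume Es: "Es \<subseteq> pauli_group n" and one: "1\<^sub>m (2^n) \<in> Es"
      and max: "maximal_correctable n k U Es"
    let ?R = "\<lambda>\<chi>. representative Es \<chi> * Pi_pn"
    have R: "complete_frames n k U ?R" by (rule representative_frames_complete[OF Es max])
    have aligned: "frame_aligned ?R Es" by (rule representative_frames_aligned[OF Es one max])
    show "\<exists>R. complete_frames n k U R \<and> corrects n k U (channelO n k U R) Es \<and>
        (\<forall>R'. complete_frames n k U R' \<and> corrects n k U (channelO n k U R') Es \<longrightarrow>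
          (\<forall>\<chi>\<in>chars n k - {triv_char}. \<exists>\<theta>. cmod \<theta> = 1 \<and> R' \<chi> = \<theta> \<cdot>\<^sub>m R \<chi>))"
      using R corrects_if_frame_aligned[OF R Es aligned] frame_unique[OF Es max] by blast
  qed
qed

end
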